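(* Let $G=(\mathcal{V},\mathcal{E})$, the corrupt set $\mathcal{V}_c$, and the other graph notation be as in the context, and assume every honest node has at least one corrupt neighbour. Let $p$ be an integer larger than any possible value of $\sum_{j\in\mathcal{V}}S_j$, and let the private data $S_1,\dots,S_n$ be mutually independent random variables with values in $\{0,\dots,p-1\}$. For every ordered pair $(i,j)$ with $j\in\mathcal{N}_i$ let $R_i^j$ be uniform on $\mathbb{Z}_p$, all these mutually independent and independent of $(S_1,\dots,S_n)$; set $R_i^i=S_i-\sum_{j\in\mathcal{N}_i}R_i^j\bmod p$ and $$S_i'=R_i^i+\textstyle\sum_{j\in\mathcal{N}_i}R_j^i \bmod p\ \in\{0,\dots,p-1\}.$$ Run the following iteration with inputs $S_i'$ (viewed as real numbers), constants $c>0$, $\theta\in[0,1)$, and initialization $z_{i|j}^{(0)}=0$: for $t\ge 0$, $$x_i^{(t+1)}=\frac{S_i'-\sum_{j\in\mathcal{N}_i}B_{i|j}z_{i|j}^{(t)}}{1+c\,d_i},\qquad z_{j|i}^{(t+1)}=\theta z_{j|i}^{(t)}+(1-\theta)\big(z_{i|j}^{(t)}+2cB_{i|j}x_i^{(t+1)}\big)\ \ (j\in\mathcal{N}_i).$$ Let the adversary's view be $\mathcal{O}=\{S_j\}_{j\in\mathcal{V}_c}\cup\{R_j^k,R_k^j\}_{\{j,k\}\in\mathcal{E}_c}\cup\{X^{(t)}\}_{t\ge1}$, where $X^{(t)}=(x_1^{(t)},\dots,x_n^{(t)})$. Then for every honest node $i\in\mathcal{V}_h$, $$\mathrm{I}(S_i;\mathcal{O})=\mathrm{I}\Big(S_i;\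 \textstyle\sum_{j\in\mathcal{V}_{h,1}}S_j\Big).$$
   Context: $G=(\mathcal{V},\mathcal{E})$ is a connected undirected graph, $\mathcal{V}=\{1,\dots,n\}$, $\mathcal{N}_i$ the neighbours of $i$, $d_i=|\mathcal{N}_i|$. For an edge $\{i,j\}$ with $i<j$: $B_{i|j}=1$, $B_{j|i}=-1$. $\mathcal{V}_c\subseteq\mathcal{V}$ is the set of corrupt nodes, $\mathcal{V}_h=\mathcal{V}\setminus\mathcal{V}_c$ the honest nodes, $\mathcal{E}_h$ the edges with both endpoints honest, $\mathcal{E}_c=\mathcal{E}\setminus\mathcal{E}_h$, $G_h=(\mathcal{V}_h,\mathcal{E}_h)$, and $\mathcal{V}_{h,1}$ is the vertex set of the connected component of $G_h$ containing the considered honest node $i$. $\mathrm{I}$ denotes mutual information. *)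

theory Defs
  imports "HOL-Probability.Probability"
begin

definition nbrs :: "nat set set \<Rightarrow> nat \<Rightarrow> nat set" where
  "nbrs E i = {j. {i, j} \<in> E}"

definition adj :: "nat set set \<Rightarrow> (nat \<times> nat) set" where
  "adj E = {(i, j). {i, j} \<in> E}"

definition simple_graph :: "nat \<Rightarrow> nat set set \<Rightarrow> bool" where
  "simple_graph n E \<longleftrightarrow> (\<forall>e\<in>E. \<exists>i j. e = {i, j} \<and> i \<noteq> j \<and> i \<in> {1..n} \<and> j \<in> {1..n})"

definition connected_graph :: "nat \<Rightarrow> nat set set \<Rightarrow> bool" where
  "connected_graph n E \<longleftrightarrow> (\<forall>i\<in>{1..n}. \<forall>j\<in>{1..n}. (i, j) \<in> (adj E)\<^sup>*)"

definition Bsign :: "nat \<Rightarrow> nat \<Rightarrow> real" where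
  "Bsign i j = (if i < j then 1 else -1)"

definition honest_edges :: "nat set set \<Rightarrow> nat set \<Rightarrow> nat set set" where
  "honest_edges E Vh = {e \<in> E. e \<subseteq> Vh}"

definition honest_component :: "nat set set \<Rightarrow> nat set \<Rightarrow> nat \<Rightarrow> nat set" where
  "honest_component E Vh i = {j. (i, j) \<in> (adj (honest_edges E Vh))\<^sup>*}"

text \<open>R i j w is R_i^j. Self share R_i^i = S_i - sum_{j in N_i} R_i^j mod p.\<close>
definition self_share ::
  "nat set set \<Rightarrow> nat \<Rightarrow> (nat \<Rightarrow> 'm \<Rightarrow> nat) \<Rightarrow> (nat \<Rightarrow> nat \<Rightarrow> 'm \<Rightarrow> nat) \<Rightarrow> nat \<Rightarrow> 'm \<Rightarrow> int" where
  "self_share E p S R i w = (int (S i w) - (\<Sum>j\<in>nbrs E i. int (R i j w))) mod int p"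

definition masked_input ::
  "nat set set \<Rightarrow> nat \<Rightarrow> (nat \<Rightarrow> 'm \<Rightarrow> nat) \<Rightarrow> (nat \<Rightarrow> nat \<Rightarrow> 'm \<Rightarrow> nat) \<Rightarrow> nat \<Rightarrow> 'm \<Rightarrow> int" where
  "masked_input E p S R i w =
     (self_share E p S R i w + (\<Sum>j\<in>nbrs E i. int (R j i w))) mod int p"

text \<open>Auxiliary variables: pdmm_z E c \<theta> s t i j = z_{i|j}^{(t)} (input s).
  pdmm_x E c \<theta> s t i = x_i^{(t+1)}.\<close>
fun pdmm_z :: "nat set set \<Rightarrow> real \<Rightarrow> real \<Rightarrow> (nat \<Rightarrow> real) \<Rightarrow> nat \<Rightarrow> nat \<Rightarrow> nat \<Rightarrow> real" where
  "pdmm_z E c \<theta> s 0 = (\<lambda>i j. 0)"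
| "pdmm_z E c \<theta> s (Suc t) =
     (\<lambda>j i. \<theta> * pdmm_z E c \<theta> s t j i
        + (1 - \<theta>) * (pdmm_z E c \<theta> s t i j + 2 * c * Bsign i j *
            ((s i - (\<Sum>k\<in>nbrs E i. Bsign i k * pdmm_z E c \<theta> s t i k))
              / (1 + c * real (card (nbrs E i))))))"

definition pdmm_x :: "nat set set \<Rightarrow> real \<Rightarrow> real \<Rightarrow> (nat \<Rightarrow> real) \<Rightarrow> nat \<Rightarrow> nat \<Rightarrow> real" where
  "pdmm_x E c \<theta> s t i =
     (s i - (\<Sum>j\<in>nbrs E i. Bsign i j * pdmm_z E c \<theta> s t i j)) / (1 + c * real (card (nbrs E i)))"

text \<open>O = ({S_j}_{j in Vc}, {R_j^k, R_k^j}_{{j,k} in Ec}, (X^{(t)})_{t>=1}); component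
  t of the third entry is X^{(t+1)} restricted to {1..n}.\<close>
definition adversary_view ::
  "nat \<Rightarrow> nat set set \<Rightarrow> nat set \<Rightarrow> nat \<Rightarrow> real \<Rightarrow> real \<Rightarrow>
   (nat \<Rightarrow> 'm \<Rightarrow> nat) \<Rightarrow> (nat \<Rightarrow> nat \<Rightarrow> 'm \<Rightarrow> nat) \<Rightarrow> 'm \<Rightarrow>
   (nat \<Rightarrow> nat) \<times> (nat \<times> nat \<Rightarrow> nat) \<times> (nat \<Rightarrow> nat \<Rightarrow> real)" where
  "adversary_view n E Vc p c \<theta> S R w =
     (restrict (\<lambda>j. S j w) Vc,
      restrict (\<lambda>(j, k). R j k w) {(j, k). {j, k} \<in> E - honest_edges E ({1..n} - Vc)},
      (\<lambda>t. restrict (pdmm_x E c \<theta> (\<lambda>i. real_of_int (masked_input E p S R i w)) t) {1..n}))"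

end

theory Submission
  imports Defs "HOL-Number_Theory.Cong"
begin

text \<open>All randomness lives in the finite configuration of secrets and shares. The adversary's view
  is a function of its own secrets, of the shares on edges touching a corrupt node and of the
  masked inputs \<open>S'\<close>: the first iterate reveals \<open>S'\<close> because \<open>1 + c d\<^sub>j > 0\<close>, and all later
  iterates are functions of \<open>S'\<close>. Summing the masked inputs over the honest component \<open>Vh1\<close>
  of \<open>i\<close> cancels the honest shares, so the view determines the component sum, which is below \<open>p\<close>.
  Conversely, for fixed secrets the honest shares compatible with a view are the solutions modulo
  \<open>p\<close> of a net-inflow problem on the honest subgraph. Such a problem is solvable iff its demands
  sum to zero on every component, and then it has as many solutions as the homogeneous one.
  Hence \<open>P(S i = x, O = v)\<close> factors into a term depending on \<open>v\<close> alone and a term depending only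
  on \<open>x\<close> and the component sum encoded in \<open>v\<close>: the component sum is a sufficient statistic of
  the view for \<open>S i\<close>, and both mutual informations coincide.\<close>

section \<open>Mutual information of discrete random variables\<close>

lemma sum_group_by_image:
  assumes "finite A"
  shows "(\<Sum>a\<in>A. h a (g a)) = (\<Sum>z\<in>g ` A. \<Sum>a\<in>{a\<in>A. g a = z}. h a z)"
  by (subst sum.image_gen[OF assms, where g = g]) (auto intro!: sum.cong)

text \<open>On the support of the joint law, the conditional probability of \<open>X = x\<close> given \<open>V = v\<close>
  equals the one given the coarser \<open>Z = g v\<close>.\<close>

lemma mult_log_ratio_eq:
  fixes a c v w :: real
  assumes "0 \<le> a" "a \<le> v" "v \<le> w" "a * w = c * v"
  shows "a * log b (a / (x * v)) = a * log b (c / (x * w))"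
proof (cases "a = 0")
  case False
  with assms have "v > 0" "w > 0" by linarith+
  with assms(4) have ratio: "a / v = c / w" by (simp add: field_simps)
  have "a / (x * v) = a / v / x" "c / (x * w) = c / w / x"
    by (simp_all add: mult.commute)
  then show ?thesis
    by (simp only: ratio)
qed simp

context prob_space
begin

lemma distributed_count_space:
  assumes A: "countable A" and XA: "X \<in> space M \<rightarrow> A"
    and meas: "\<And>a. a \<in> A \<Longrightarrow> X -` {a} \<inter> space M \<in> sets M"
  shows "distributed M (count_space A) X (\<lambda>a. ennreal (prob (X -` {a} \<inter> space M)))"
proof -
  have mX: "X \<in> measurable M (count_space A)"
    using A XA meas by (simp add: measurable_count_space_eq_countable)
  have "distr M (count_space A) X = density (count_space A) (\<lambda>a. ennreal (prob (X -` {a} \<inter> space M)))"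
  proof (rule measure_eqI_countable[OF _ _ A])
    fix a assume a: "a \<in> A"
    have "emeasure (distr M (count_space A) X) {a} = emeasure M (X -` {a} \<inter> space M)"
      using a mX by (simp add: emeasure_distr)
    also have "\<dots> = ennreal (prob (X -` {a} \<inter> space M))"
      using meas[OF a] by (simp add: emeasure_eq_measure)
    also have "\<dots> = emeasure (density (count_space A) (\<lambda>a. ennreal (prob (X -` {a} \<inter> space M)))) {a}"
      using a by (simp add: emeasure_density nn_integral_count_space_indicator nn_integral_indicator_finite)
    finally show "emeasure (distr M (count_space A) X) {a} =
        emeasure (density (count_space A) (\<lambda>a. ennreal (prob (X -` {a} \<inter> space M)))) {a}" .
  qed auto
  then show ?thesis using mX unfolding distributed_def by simp
qed

lemma AE_mem_if_null_outside:
  assumes cV: "countable (V ` space M)" and mV: "\<And>a. V -` {a} \<inter> space M \<in> sets M"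
    and null: "\<And>a. a \<in> V ` space M \<Longrightarrow> a \<notin> F \<Longrightarrow> prob (V -` {a} \<inter> space M) = 0"
  shows "AE w in M. V w \<in> F"
proof -
  have "(\<Union>a\<in>V ` space M - F. V -` {a} \<inter> space M) \<in> null_sets M"
    using cV mV null by (intro null_sets_UN') (auto simp: null_sets_def emeasure_eq_measure)
  then show ?thesis
    by (rule AE_I') auto
qed

lemma prob_vimage_eq_0_outside_image:
  assumes "AE w in M. V w \<in> F" and "Z -` {z} \<inter> space M \<in> sets M"
    and "\<And>w. w \<in> space M \<Longrightarrow> Z w = g (V w)" and "z \<notin> g ` F"
  shows "prob (Z -` {z} \<inter> space M) = 0"
proof -
  have "prob (Z -` {z} \<inter> space M) = measure M {}"
    by (rule finite_measure_eq_AE) (use assms in \<open>auto elim!: eventually_mono\<close>)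
  then show ?thesis by simp
qed

lemma prob_pair_eq_sum_fiber:
  assumes F: "finite F" and AE_F: "AE w in M. V w \<in> F"
    and mX: "\<And>a. X -` {a} \<inter> space M \<in> sets M"
    and mV: "\<And>a. V -` {a} \<inter> space M \<in> sets M"
    and mZ: "\<And>a. Z -` {a} \<inter> space M \<in> sets M"
    and Zg: "\<And>w. w \<in> space M \<Longrightarrow> Z w = g (V w)"
  shows "(\<Sum>v\<in>{v\<in>F. g v = z}. prob ((\<lambda>w. (X w, V w)) -` {(x, v)} \<inter> space M)) =
         prob ((\<lambda>w. (X w, Z w)) -` {(x, z)} \<inter> space M)"
proof -
  have mXV: "(\<lambda>w. (X w, V w)) -` {(x, v)} \<inter> space M \<in> sets M" for v
  proof -
    have "(\<lambda>w. (X w, V w)) -` {(x, v)} \<inter> space M = (X -` {x} \<inter> space M) \<inter> (V -` {v} \<inter> space M)"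
      by auto
    then show ?thesis using mX mV by auto
  qed
  have mXZ: "(\<lambda>w. (X w, Z w)) -` {(x, z)} \<inter> space M \<in> sets M"
  proof -
    have "(\<lambda>w. (X w, Z w)) -` {(x, z)} \<inter> space M = (X -` {x} \<inter> space M) \<inter> (Z -` {z} \<inter> space M)"
      by auto
    then show ?thesis using mX mZ by auto
  qed
  have "(\<Sum>v\<in>{v\<in>F. g v = z}. prob ((\<lambda>w. (X w, V w)) -` {(x, v)} \<inter> space M)) =
      prob (\<Union>v\<in>{v\<in>F. g v = z}. (\<lambda>w. (X w, V w)) -` {(x, v)} \<inter> space M)"
    using F mXV
    by (intro measure_finite_Union[symmetric]) (auto simp: disjoint_family_on_def emeasure_eq_measure)
  also have "\<dots> = prob ((\<lambda>w. (X w, Z w)) -` {(x, z)} \<inter> space M)"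
  proof (rule finite_measure_eq_AE)
    show "AE w in M. (w \<in> (\<Union>v\<in>{v\<in>F. g v = z}. (\<lambda>w. (X w, V w)) -` {(x, v)} \<inter> space M)) =
                     (w \<in> (\<lambda>w. (X w, Z w)) -` {(x, z)} \<inter> space M)"
      using AE_F by eventually_elim (use Zg in auto)
    show "(\<Union>v\<in>{v\<in>F. g v = z}. (\<lambda>w. (X w, V w)) -` {(x, v)} \<inter> space M) \<in> sets M"
      using F mXV by (intro sets.finite_UN) auto
  qed (use mXZ in auto)
  finally show ?thesis .
qed

end

context information_space
begin

lemma mutual_information_count_space:
  fixes X :: "'a \<Rightarrow> 'b" and Y :: "'a \<Rightarrow> 'c"
  assumes cX: "countable (X ` space M)" and cY: "countable (Y ` space M)"
    and mX: "\<And>a. X -` {a} \<inter> space M \<in> sets M"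
    and mY: "\<And>a. Y -` {a} \<inter> space M \<in> sets M"
  shows "mutual_information b (count_space (X ` space M)) (count_space (Y ` space M)) X Y =
    integral\<^sup>L (count_space (X ` space M \<times> Y ` space M))
      (\<lambda>xy. prob ((\<lambda>w. (X w, Y w)) -` {xy} \<inter> space M) *
        log b (prob ((\<lambda>w. (X w, Y w)) -` {xy} \<inter> space M) /
               (prob (X -` {fst xy} \<inter> space M) * prob (Y -` {snd xy} \<inter> space M))))"
proof -
  let ?A = "X ` space M" and ?B = "Y ` space M"
  have pm: "count_space ?A \<Otimes>\<^sub>M count_space ?B = count_space (?A \<times> ?B)"
    using cX cY by (rule pair_measure_countable)
  have mXY: "(\<lambda>w. (X w, Y w)) -` {xy} \<inter> space M \<in> sets M" for xy
  proof -
    have "(\<lambda>w. (X w, Y w)) -` {xy} \<inter> space M = (X -` {fst xy} \<inter> space M) \<inter> (Y -` {snd xy} \<inter> space M)"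
      by (cases xy) auto
    then show ?thesis using mX mY by auto
  qed
  have sf: "sigma_finite_measure (count_space ?A)" "sigma_finite_measure (count_space ?B)"
    using cX cY by (auto intro!: sigma_finite_measure_count_space_countable)
  have dX: "distributed M (count_space ?A) X (\<lambda>a. ennreal (prob (X -` {a} \<inter> space M)))"
    using cX mX by (intro distributed_count_space) auto
  have dY: "distributed M (count_space ?B) Y (\<lambda>a. ennreal (prob (Y -` {a} \<inter> space M)))"
    using cY mY by (intro distributed_count_space) auto
  have dXY: "distributed M (count_space ?A \<Otimes>\<^sub>M count_space ?B) (\<lambda>w. (X w, Y w))
      (\<lambda>xy. ennreal (prob ((\<lambda>w. (X w, Y w)) -` {xy} \<inter> space M)))"
    unfolding pm using cX cY mXY by (intro distributed_count_space) auto
  show ?thesis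
    unfolding pm[symmetric] by (rule mutual_information_distr[OF sf dX _ dY _ dXY]) auto
qed

lemma mutual_information_finite_support:
  fixes X :: "'a \<Rightarrow> 'b" and Y :: "'a \<Rightarrow> 'c"
  assumes cX: "countable (X ` space M)" and cY: "countable (Y ` space M)"
    and mX: "\<And>a. X -` {a} \<inter> space M \<in> sets M"
    and mY: "\<And>a. Y -` {a} \<inter> space M \<in> sets M"
    and FX: "finite FX" "FX \<subseteq> X ` space M"
    and FY: "finite FY" "FY \<subseteq> Y ` space M"
    and nullX: "\<And>a. a \<in> X ` space M \<Longrightarrow> a \<notin> FX \<Longrightarrow> prob (X -` {a} \<inter> space M) = 0"
    and nullY: "\<And>a. a \<in> Y ` space M \<Longrightarrow> a \<notin> FY \<Longrightarrow> prob (Y -` {a} \<inter> space M) = 0"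
  shows "mutual_information b (count_space (X ` space M)) (count_space (Y ` space M)) X Y =
    (\<Sum>x\<in>FX. \<Sum>y\<in>FY. prob ((\<lambda>w. (X w, Y w)) -` {(x, y)} \<inter> space M) *
        log b (prob ((\<lambda>w. (X w, Y w)) -` {(x, y)} \<inter> space M) /
               (prob (X -` {x} \<inter> space M) * prob (Y -` {y} \<inter> space M))))"
proof -
  let ?A = "X ` space M" and ?B = "Y ` space M"
  define Pxy where "Pxy = (\<lambda>xy. prob ((\<lambda>w. (X w, Y w)) -` {xy} \<inter> space M))"
  define f where "f = (\<lambda>xy. Pxy xy * log b (Pxy xy / (prob (X -` {fst xy} \<inter> space M) *
    prob (Y -` {snd xy} \<inter> space M))))"
  have "Pxy (X w1, Y w2) = 0" if w: "w1 \<in> space M" "w2 \<in> space M" and "X w1 \<notin> FX \<or> Y w2 \<notin> FY"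
    for w1 w2
  proof -
    have "Pxy (X w1, Y w2) \<le> prob (X -` {X w1} \<inter> space M)"
      unfolding Pxy_def by (rule finite_measure_mono) (auto intro: mX)
    moreover have "Pxy (X w1, Y w2) \<le> prob (Y -` {Y w2} \<inter> space M)"
      unfolding Pxy_def by (rule finite_measure_mono) (auto intro: mY)
    moreover have "0 \<le> Pxy (X w1, Y w2)"
      unfolding Pxy_def by simp
    moreover have "prob (X -` {X w1} \<inter> space M) = 0 \<or> prob (Y -` {Y w2} \<inter> space M) = 0"
      using that nullX nullY by blast
    ultimately show ?thesis by linarith
  qed
  then have supp: "{xy \<in> ?A \<times> ?B. f xy \<noteq> 0} \<subseteq> FX \<times> FY"
    unfolding f_def by auto
  have "finite {xy \<in> ?A \<times> ?B. f xy \<noteq> 0}"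
    using supp FX FY by (meson finite_SigmaI finite_subset)
  then have "integral\<^sup>L (count_space (?A \<times> ?B)) f = (\<Sum>xy | xy \<in> ?A \<times> ?B \<and> f xy \<noteq> 0. f xy)"
    by (intro lebesgue_integral_count_space_finite_support) simp
  also have "\<dots> = (\<Sum>xy \<in> FX \<times> FY. f xy)"
    using supp FX FY by (intro sum.mono_neutral_left) auto
  finally show ?thesis
    unfolding mutual_information_count_space[OF cX cY mX mY] f_def Pxy_def
    by (simp add: sum.cartesian_product split_beta)
qed

lemma mutual_information_sufficient_statistic:
  assumes cX: "countable (X ` space M)" and cV: "countable (V ` space M)"
    and mX: "\<And>a. X -` {a} \<inter> space M \<in> sets M"
    and mV: "\<And>a. V -` {a} \<inter> space M \<in> sets M"
    and mZ: "\<And>a. Z -` {a} \<inter> space M \<in> sets M"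
    and FX: "finite FX" "FX \<subseteq> X ` space M"
    and FV: "finite FV" "FV \<subseteq> V ` space M"
    and nullX: "\<And>a. a \<in> X ` space M \<Longrightarrow> a \<notin> FX \<Longrightarrow> prob (X -` {a} \<inter> space M) = 0"
    and nullV: "\<And>a. a \<in> V ` space M \<Longrightarrow> a \<notin> FV \<Longrightarrow> prob (V -` {a} \<inter> space M) = 0"
    and Zg: "\<And>w. w \<in> space M \<Longrightarrow> Z w = g (V w)"
    and cond_indep: "\<And>x v. x \<in> FX \<Longrightarrow> v \<in> FV \<Longrightarrow>
       prob ((\<lambda>w. (X w, V w)) -` {(x, v)} \<inter> space M) * prob (Z -` {g v} \<inter> space M) =
       prob ((\<lambda>w. (X w, Z w)) -` {(x, g v)} \<inter> space M) * prob (V -` {v} \<inter> space M)"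
  shows "mutual_information b (count_space (X ` space M)) (count_space (V ` space M)) X V =
         mutual_information b (count_space (X ` space M)) (count_space (Z ` space M)) X Z"
proof -
  let ?Pxv = "\<lambda>x v. prob ((\<lambda>w. (X w, V w)) -` {(x, v)} \<inter> space M)"
  let ?Pxz = "\<lambda>x z. prob ((\<lambda>w. (X w, Z w)) -` {(x, z)} \<inter> space M)"
  let ?Px = "\<lambda>x. prob (X -` {x} \<inter> space M)"
  let ?Pv = "\<lambda>v. prob (V -` {v} \<inter> space M)"
  let ?Pz = "\<lambda>z. prob (Z -` {z} \<inter> space M)"
  have ZV: "Z ` space M = g ` V ` space M" using Zg by (auto simp: image_iff)
  have cZ: "countable (Z ` space M)" unfolding ZV using cV by simp
  have FZ: "finite (g ` FV)" "g ` FV \<subseteq> Z ` space M" using FV unfolding ZV by auto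
  have AE_FV: "AE w in M. V w \<in> FV" by (rule AE_mem_if_null_outside[OF cV mV nullV])
  have nullZ: "?Pz z = 0" if "z \<in> Z ` space M" "z \<notin> g ` FV" for z
    using AE_FV mZ Zg that(2) by (rule prob_vimage_eq_0_outside_image)
  have fiber: "(\<Sum>v\<in>{v\<in>FV. g v = z}. ?Pxv x v) = ?Pxz x z" for x z
    by (rule prob_pair_eq_sum_fiber[OF FV(1) AE_FV mX mV mZ Zg])
  have log_arg: "?Pxv x v * log b (?Pxv x v / (?Px x * ?Pv v)) =
      ?Pxv x v * log b (?Pxz x (g v) / (?Px x * ?Pz (g v)))" if "x \<in> FX" "v \<in> FV" for x v
  proof (rule mult_log_ratio_eq)
    show "?Pxv x v \<le> ?Pv v" by (rule finite_measure_mono) (auto intro: mV)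
    show "?Pv v \<le> ?Pz (g v)" by (rule finite_measure_mono) (use Zg mZ in auto)
  qed (use cond_indep[OF that] in simp_all)
  have "mutual_information b (count_space (X ` space M)) (count_space (V ` space M)) X V =
      (\<Sum>x\<in>FX. \<Sum>v\<in>FV. ?Pxv x v * log b (?Pxv x v / (?Px x * ?Pv v)))"
    by (rule mutual_information_finite_support[OF cX cV mX mV FX FV nullX nullV])
  also have "\<dots> = (\<Sum>x\<in>FX. \<Sum>v\<in>FV. ?Pxv x v * log b (?Pxz x (g v) / (?Px x * ?Pz (g v))))"
    using log_arg by (intro sum.cong refl) auto
  also have "\<dots> = (\<Sum>x\<in>FX. \<Sum>z\<in>g ` FV. ?Pxz x z * log b (?Pxz x z / (?Px x * ?Pz z)))"
  proof (rule sum.cong[OF refl])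
    fix x
    show "(\<Sum>v\<in>FV. ?Pxv x v * log b (?Pxz x (g v) / (?Px x * ?Pz (g v)))) =
        (\<Sum>z\<in>g ` FV. ?Pxz x z * log b (?Pxz x z / (?Px x * ?Pz z)))"
      using sum_group_by_image[OF FV(1), of "\<lambda>v z. ?Pxv x v * log b (?Pxz x z / (?Px x * ?Pz z))" g]
      by (simp add: sum_distrib_right[symmetric] fiber)
  qed
  also have "\<dots> = mutual_information b (count_space (X ` space M)) (count_space (Z ` space M)) X Z"
    by (rule mutual_information_finite_support[OF cX cZ mX mZ FX FZ nullX nullZ, symmetric])
  finally show ?thesis .
qed

end

section \<open>Sums over finite configuration spaces\<close>

lemma sum_PiE_Un_restrict_mult:
  fixes f g :: "('a \<Rightarrow> 'b) \<Rightarrow> 'c::semiring_0"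
  assumes disj: "A \<inter> B = {}"
  shows "(\<Sum>s\<in>PiE (A \<union> B) X. f (restrict s A) * g (restrict s B)) =
         (\<Sum>s\<in>PiE A X. f s) * (\<Sum>s\<in>PiE B X. g s)"
proof -
  have "(\<Sum>s\<in>PiE A X. f s) * (\<Sum>s\<in>PiE B X. g s) = (\<Sum>ab\<in>PiE A X \<times> PiE B X. f (fst ab) * g (snd ab))"
    by (simp add: sum_product sum.cartesian_product split_beta)
  also have "\<dots> = (\<Sum>s\<in>PiE (A \<union> B) X. f (restrict s A) * g (restrict s B))"
    by (rule sum.reindex_bij_witness[of _ "\<lambda>s. (restrict s A, restrict s B)" "merge A B"])
      (use disj in \<open>auto simp: PiE_iff\<close>)
  finally show ?thesis ..
qed

lemma sum_filter_Times_fst: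
  fixes f :: "'a \<Rightarrow> 'c::comm_semiring_1"
  assumes "finite A" "finite B"
  shows "(\<Sum>d\<in>{d\<in>A \<times> B. P d}. f (fst d)) = (\<Sum>a\<in>A. f a * of_nat (card {b\<in>B. P (a, b)}))"
proof -
  have "{d\<in>A \<times> B. P d} = Sigma A (\<lambda>a. {b\<in>B. P (a, b)})" by auto
  moreover have "(\<Sum>a\<in>A. \<Sum>b\<in>{b\<in>B. P (a, b)}. f a) = (\<Sum>d\<in>Sigma A (\<lambda>a. {b\<in>B. P (a, b)}). f (fst d))"
    using assms by (subst sum.Sigma) (auto simp: split_beta)
  ultimately show ?thesis by (simp add: mult.commute)
qed

lemma card_filter_bij_betw:
  assumes "bij_betw f A B"
  shows "card {a\<in>A. P (f a)} = card {b\<in>B. P b}"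
proof -
  have "bij_betw f {a\<in>A. P (f a)} {b\<in>B. P b}"
    using assms by (auto simp: bij_betw_def inj_on_def image_iff)
  then show ?thesis by (rule bij_betw_same_card)
qed

section \<open>Flows on a finite symmetric relation\<close>

locale finite_sym_relation =
  fixes V :: "'a set" and D :: "('a \<times> 'a) set"
  assumes finite_V: "finite V" and D_subset: "D \<subseteq> V \<times> V" and sym_D: "sym D"
begin

definition net_inflow :: "('a \<times> 'a \<Rightarrow> int) \<Rightarrow> 'a \<Rightarrow> int" where
  "net_inflow r j = (\<Sum>k\<in>D `` {j}. r (k, j) - r (j, k))"

abbreviation component :: "'a \<Rightarrow> 'a set" where
  "component j \<equiv> D\<^sup>* `` {j}"

lemma finite_D: "finite D"
  using D_subset finite_V by (meson finite_SigmaI finite_subset)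

lemma finite_neighbours: "finite (D `` {j})"
  using finite_D by simp

lemma converse_mem_D: "(j, k) \<in> D \<Longrightarrow> (k, j) \<in> D"
  using sym_D by (auto simp: sym_def)

lemma component_subset: "j \<in> V \<Longrightarrow> component j \<subseteq> V"
proof
  fix k assume j: "j \<in> V" and "k \<in> component j"
  then have "(j, k) \<in> D\<^sup>*" by simp
  then show "k \<in> V" using j by (induction rule: rtrancl_induct) (use D_subset in auto)
qed

lemma finite_component: "j \<in> V \<Longrightarrow> finite (component j)"
  using component_subset finite_V by (rule finite_subset)

lemma component_eq: "k \<in> component j \<Longrightarrow> component k = component j"
  using sym_rtrancl[OF sym_D] by (auto simp: sym_def intro: rtrancl_trans)

lemma sum_net_inflow_component:
  assumes j: "j \<in> V"
  shows "(\<Sum>k\<in>component j. net_inflow r k) = 0"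
proof -
  let ?P = "SIGMA k:component j. D `` {k}"
  \<comment> \<open>An arc starting in the component ends in it, so reversing arcs permutes \<open>?P\<close>.\<close>
  have swap: "(snd x, fst x) \<in> ?P" if x: "x \<in> ?P" for x
  proof -
    obtain a b where ab: "x = (a, b)" by (cases x)
    with x have "(j, a) \<in> D\<^sup>*" "(a, b) \<in> D" by auto
    then show ?thesis using ab converse_mem_D rtrancl_into_rtrancl by fastforce
  qed
  have "(\<Sum>x\<in>?P. r (snd x, fst x)) = (\<Sum>x\<in>?P. r x)"
    by (rule sum.reindex_bij_witness[of _ "\<lambda>x. (snd x, fst x)" "\<lambda>x. (snd x, fst x)"])
      (simp only: swap fst_conv snd_conv prod.collapse)+
  then show ?thesis
    using finite_component[OF j] finite_neighbours
    by (simp add: net_inflow_def sum_subtractf sum.Sigma split_beta)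
qed

lemma net_inflow_cong:
  "(\<And>e. e \<in> D \<Longrightarrow> f e = g e) \<Longrightarrow> net_inflow f j = net_inflow g j"
  unfolding net_inflow_def by (intro sum.cong refl) (auto dest: converse_mem_D)

lemma net_inflow_cong_mod:
  assumes "\<And>e. e \<in> D \<Longrightarrow> [f e = g e] (mod m)"
  shows "[net_inflow f j = net_inflow g j] (mod m)"
  unfolding net_inflow_def by (intro cong_sum cong_diff) (auto intro: assms dest: converse_mem_D)

lemma net_inflow_add: "net_inflow (\<lambda>e. f e + g e) j = net_inflow f j + net_inflow g j"
  unfolding net_inflow_def by (simp add: sum.distrib[symmetric] algebra_simps)

lemma net_inflow_mult: "net_inflow (\<lambda>e. c * f e) j = c * net_inflow f j"
  unfolding net_inflow_def by (simp add: sum_distrib_left algebra_simps)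

lemma net_inflow_sum: "net_inflow (\<lambda>e. \<Sum>a\<in>A. f a e) j = (\<Sum>a\<in>A. net_inflow (f a) j)"
  unfolding net_inflow_def by (simp add: sum_subtractf[symmetric] sum.swap[of _ A])

lemma net_inflow_unit_arc:
  assumes kj: "(k, j) \<in> D"
  shows "net_inflow (\<lambda>e. if e = (k, j) then 1 else 0) u = (if u = j then 1 else 0) - (if u = k then 1 else 0)"
proof -
  have into: "(\<Sum>l\<in>D `` {u}. if (l, u) = (k, j) then 1 else 0) = (if u = j then 1 else (0::int))"
    using converse_mem_D[OF kj] by (cases "u = j") (simp_all add: finite_neighbours)
  have out: "(\<Sum>l\<in>D `` {u}. if (u, l) = (k, j) then 1 else 0) = (if u = k then 1 else (0::int))"
    using kj by (cases "u = k") (simp_all add: finite_neighbours)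
  show ?thesis
    unfolding net_inflow_def sum_subtractf into out ..
qed

lemma exists_flow_along_path:
  assumes "(j, k) \<in> D\<^sup>*"
  shows "\<exists>r. \<forall>u. net_inflow r u = (if u = k then 1 else 0) - (if u = j then 1 else 0)"
  using assms
proof (induction rule: rtrancl_induct)
  case base
  show ?case by (rule exI[of _ "\<lambda>_. 0"]) (simp add: net_inflow_def)
next
  case (step y z)
  then obtain r where "\<forall>u. net_inflow r u = (if u = y then 1 else 0) - (if u = j then 1 else 0)"
    by blast
  then show ?case
    by (intro exI[of _ "\<lambda>e. r e + (if e = (y, z) then 1 else 0)"])
      (simp add: net_inflow_add net_inflow_unit_arc[OF step.hyps(2)])
qed

definition component_root :: "'a \<Rightarrow> 'a" where
  "component_root j = (SOME k. k \<in> component j)"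

lemma component_root_in: "component_root j \<in> component j"
  unfolding component_root_def by (rule someI[of _ j]) simp

lemma component_root_fiber:
  assumes j0: "j0 \<in> V"
  shows "{j \<in> V. component_root j = component_root j0} = component j0"
proof (intro set_eqI iffI)
  fix j assume "j \<in> {j \<in> V. component_root j = component_root j0}"
  then have "component j = component j0"
    using component_eq[OF component_root_in[of j]] component_eq[OF component_root_in[of j0]] by simp
  then show "j \<in> component j0" by (metis Image_singleton_iff rtrancl.rtrancl_refl)
next
  fix j assume j: "j \<in> component j0"
  have "component_root j = component_root j0"
    unfolding component_root_def component_eq[OF j] ..
  then show "j \<in> {j \<in> V. component_root j = component_root j0}"
    using component_subset[OF j0] j by auto
qed

lemma exists_flows_from_roots:
  "\<exists>rr. \<forall>j u. net_inflow (rr j) u = (if u = j then 1 else 0) - (if u = component_root j then 1 else 0)"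
proof -
  have "\<exists>r. \<forall>u. net_inflow r u = (if u = j then 1 else 0) - (if u = component_root j then 1 else 0)" for j
  proof -
    have "(j, component_root j) \<in> D\<^sup>*"
      using component_root_in[of j] by simp
    then have "(component_root j, j) \<in> D\<^sup>*"
      by (rule symD[OF sym_rtrancl[OF sym_D]])
    then show ?thesis by (rule exists_flow_along_path)
  qed
  then have "\<forall>j. \<exists>r. \<forall>u. net_inflow r u = (if u = j then 1 else 0) - (if u = component_root j then 1 else 0)"
    by blast
  from choice[OF this] show ?thesis .
qed

lemma exists_net_inflow_mod:
  assumes t: "\<forall>j\<in>V. [(\<Sum>k\<in>component j. t k) = 0] (mod m)"
  shows "\<exists>r. \<forall>u\<in>V. [net_inflow r u = t u] (mod m)"
proof -
  \<comment> \<open>Route the demand \<open>t j\<close> of every vertex from the root of its component; the root then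
    absorbs the sum over the component, which vanishes modulo \<open>m\<close>.\<close>
  obtain rr where rr:
    "\<forall>j u. net_inflow (rr j) u = (if u = j then 1 else 0) - (if u = component_root j then 1 else 0)"
    using exists_flows_from_roots ..
  define r where "r = (\<lambda>e. \<Sum>j\<in>V. t j * rr j e)"
  have "[net_inflow r u = t u] (mod m)" if u: "u \<in> V" for u
  proof -
    have "net_inflow r u = (\<Sum>j\<in>V. t j * net_inflow (rr j) u)"
      unfolding r_def net_inflow_sum net_inflow_mult ..
    also have "\<dots> = (\<Sum>j\<in>V. (if j = u then t j else 0) - (if component_root j = u then t j else 0))"
      using rr by (intro sum.cong refl) auto
    also have "\<dots> = t u - (\<Sum>j\<in>{j\<in>V. component_root j = u}. t j)"
      using u finite_V by (simp add: sum_subtractf sum.inter_filter)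
    finally have eq: "net_inflow r u = t u - (\<Sum>j\<in>{j\<in>V. component_root j = u}. t j)" .
    have "[(\<Sum>j\<in>{j\<in>V. component_root j = u}. t j) = 0] (mod m)"
    proof (cases "{j\<in>V. component_root j = u} = {}")
      case False
      then obtain j0 where j0: "j0 \<in> V" "component_root j0 = u" by blast
      then have "{j\<in>V. component_root j = u} = component j0"
        using component_root_fiber[OF j0(1)] by simp
      then show ?thesis using t j0 by simp
    qed (simp only: sum.empty cong_refl)
    from cong_diff[OF cong_refl this]
    show ?thesis
      unfolding eq by simp
  qed
  then show ?thesis by blast
qed

definition flow_solutions :: "nat \<Rightarrow> ('a \<Rightarrow> int) \<Rightarrow> ('a \<times> 'a \<Rightarrow> nat) set" where
  "flow_solutions m t =
     {r \<in> D \<rightarrow>\<^sub>E {0..<m}. \<forall>j\<in>V. [net_inflow (\<lambda>e. int (r e)) j = t j] (mod int m)}"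

lemma flow_solutions_empty:
  assumes "\<not> (\<forall>j\<in>V. [(\<Sum>k\<in>component j. t k) = 0] (mod int m))"
  shows "flow_solutions m t = {}"
proof (rule ccontr)
  assume "flow_solutions m t \<noteq> {}"
  then obtain r where r: "\<forall>j\<in>V. [net_inflow (\<lambda>e. int (r e)) j = t j] (mod int m)"
    unfolding flow_solutions_def by auto
  from assms obtain j where j: "j \<in> V" and ne: "\<not> [(\<Sum>k\<in>component j. t k) = 0] (mod int m)"
    by blast
  have "[(\<Sum>k\<in>component j. net_inflow (\<lambda>e. int (r e)) k) = (\<Sum>k\<in>component j. t k)] (mod int m)"
    using r component_subset[OF j] by (intro cong_sum) auto
  with ne show False
    unfolding sum_net_inflow_component[OF j] by (simp add: cong_sym_eq)
qed

definition translate_mod :: "nat \<Rightarrow> ('a \<times> 'a \<Rightarrow> int) \<Rightarrow> ('a \<times> 'a \<Rightarrow> nat) \<Rightarrow> 'a \<times> 'a \<Rightarrow> nat" where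
  "translate_mod m r0 r = restrict (\<lambda>e. nat ((int (r e) + r0 e) mod int m)) D"

lemma translate_mod_in: "0 < m \<Longrightarrow> translate_mod m r0 r \<in> D \<rightarrow>\<^sub>E {0..<m}"
  unfolding translate_mod_def by (auto simp: nat_less_iff)

lemma translate_mod_inverse:
  assumes r: "r \<in> D \<rightarrow>\<^sub>E {0..<m}"
  shows "translate_mod m (\<lambda>e. - r0 e) (translate_mod m r0 r) = r"
proof
  fix e show "translate_mod m (\<lambda>e. - r0 e) (translate_mod m r0 r) e = r e"
  proof (cases "e \<in> D")
    case True
    with r have "r e < m" by auto
    have m: "0 < m" using \<open>r e < m\<close> by simp
    have "translate_mod m (\<lambda>e. - r0 e) (translate_mod m r0 r) e =
        nat ((int (nat ((int (r e) + r0 e) mod int m)) + - r0 e) mod int m)"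
      using True by (simp only: translate_mod_def restrict_apply if_True)
    also have "\<dots> = nat (((int (r e) + r0 e) mod int m - r0 e) mod int m)"
      using m by simp
    also have "\<dots> = nat (int (r e) mod int m)"
      by (subst mod_diff_left_eq) simp
    also have "\<dots> = r e"
      using \<open>r e < m\<close> by (simp add: zmod_int[symmetric])
    finally show ?thesis .
  qed (simp add: translate_mod_def PiE_arb[OF r])
qed

lemma net_inflow_translate_mod:
  assumes "0 < m"
  shows "[net_inflow (\<lambda>e. int (translate_mod m r0 r e)) j =
          net_inflow (\<lambda>e. int (r e)) j + net_inflow r0 j] (mod int m)"
proof -
  have "[net_inflow (\<lambda>e. int (translate_mod m r0 r e)) j = net_inflow (\<lambda>e. int (r e) + r0 e) j] (mod int m)"
    by (rule net_inflow_cong_mod) (use assms in \<open>simp add: translate_mod_def cong_def\<close>)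
  then show ?thesis by (simp only: net_inflow_add)
qed

lemma bij_betw_translate_mod:
  assumes m: "0 < m" and r0: "\<forall>u\<in>V. [net_inflow r0 u = t u] (mod int m)"
  shows "bij_betw (translate_mod m r0) (flow_solutions m (\<lambda>_. 0)) (flow_solutions m t)"
proof (rule bij_betw_byWitness[where f' = "translate_mod m (\<lambda>e. - r0 e)"])
  have neg: "net_inflow (\<lambda>e. - r0 e) j = - net_inflow r0 j" for j
    using net_inflow_mult[of "-1" r0 j] by simp
  show "\<forall>r\<in>flow_solutions m (\<lambda>_. 0). translate_mod m (\<lambda>e. - r0 e) (translate_mod m r0 r) = r"
    by (auto simp: flow_solutions_def translate_mod_inverse)
  show "\<forall>r\<in>flow_solutions m t. translate_mod m r0 (translate_mod m (\<lambda>e. - r0 e) r) = r"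
    using translate_mod_inverse[of _ m "\<lambda>e. - r0 e"] by (auto simp: flow_solutions_def)
  show "translate_mod m r0 ` flow_solutions m (\<lambda>_. 0) \<subseteq> flow_solutions m t"
  proof (clarsimp simp: flow_solutions_def translate_mod_in[OF m])
    fix r j assume "\<forall>j\<in>V. [net_inflow (\<lambda>e. int (r e)) j = 0] (mod int m)" "j \<in> V"
    then show "[net_inflow (\<lambda>e. int (translate_mod m r0 r e)) j = t j] (mod int m)"
      using cong_trans[OF net_inflow_translate_mod[OF m] cong_add[of _ 0 _ _ "t j"]] r0 by simp
  qed
  show "translate_mod m (\<lambda>e. - r0 e) ` flow_solutions m t \<subseteq> flow_solutions m (\<lambda>_. 0)"
  proof (clarsimp simp: flow_solutions_def translate_mod_in[OF m])
    fix r j assume "\<forall>j\<in>V. [net_inflow (\<lambda>e. int (r e)) j = t j] (mod int m)" "j \<in> V"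
    then show "[net_inflow (\<lambda>e. int (translate_mod m (\<lambda>e. - r0 e) r e)) j = 0] (mod int m)"
      using cong_trans[OF net_inflow_translate_mod[OF m] cong_add[of _ "t j" _ _ "- t j"]] r0
      by (simp add: neg cong_minus_minus_iff)
  qed
qed

lemma card_flow_solutions:
  assumes "0 < m"
  shows "card (flow_solutions m t) =
    (if \<forall>j\<in>V. [(\<Sum>k\<in>component j. t k) = 0] (mod int m) then card (flow_solutions m (\<lambda>_. 0)) else 0)"
proof (cases "\<forall>j\<in>V. [(\<Sum>k\<in>component j. t k) = 0] (mod int m)")
  case True
  then obtain r0 where "\<forall>u\<in>V. [net_inflow r0 u = t u] (mod int m)"
    using exists_net_inflow_mod by blast
  with True show ?thesis
    using bij_betw_same_card[OF bij_betw_translate_mod[OF assms]] by simp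
next
  case False
  then show ?thesis
    unfolding if_not_P[OF False] using flow_solutions_empty[OF False] by simp
qed

end

section \<open>Locality of the iteration and of the masking\<close>

lemma pdmm_z_cong:
  assumes s: "\<forall>k\<in>U. s k = s' k" and closed: "\<forall>k\<in>U. nbrs E k \<subseteq> U"
  shows "u \<in> U \<Longrightarrow> v \<in> U \<Longrightarrow> pdmm_z E c \<theta> s t u v = pdmm_z E c \<theta> s' t u v"
proof (induction t arbitrary: u v)
  case (Suc t)
  have "k \<in> U" if "k \<in> nbrs E v" for k
    using that closed Suc.prems by blast
  then have "(\<Sum>k\<in>nbrs E v. Bsign v k * pdmm_z E c \<theta> s t v k) =
      (\<Sum>k\<in>nbrs E v. Bsign v k * pdmm_z E c \<theta> s' t v k)"
    using Suc.IH Suc.prems by (intro sum.cong) auto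
  then show ?case
    using Suc.IH[of u v] Suc.IH[of v u] Suc.prems s by simp
qed simp

lemma pdmm_x_cong:
  assumes s: "\<forall>k\<in>U. s k = s' k" and closed: "\<forall>k\<in>U. nbrs E k \<subseteq> U" and u: "u \<in> U"
  shows "pdmm_x E c \<theta> s t u = pdmm_x E c \<theta> s' t u"
proof -
  have "(\<Sum>j\<in>nbrs E u. Bsign u j * pdmm_z E c \<theta> s t u j) = (\<Sum>j\<in>nbrs E u. Bsign u j * pdmm_z E c \<theta> s' t u j)"
  proof (rule sum.cong[OF refl])
    fix j assume "j \<in> nbrs E u"
    with closed u have "j \<in> U" by blast
    then show "Bsign u j * pdmm_z E c \<theta> s t u j = Bsign u j * pdmm_z E c \<theta> s' t u j"
      using pdmm_z_cong[OF s closed u] by simp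
  qed
  then show ?thesis using s u unfolding pdmm_x_def by simp
qed

lemma pdmm_x_0: "pdmm_x E c \<theta> s 0 u = s u / (1 + c * real (card (nbrs E u)))"
  unfolding pdmm_x_def by simp

lemma masked_input_cong:
  assumes "S1 j x1 = S2 j x2"
    and "\<And>k. k \<in> nbrs E j \<Longrightarrow> R1 j k x1 = R2 j k x2 \<and> R1 k j x1 = R2 k j x2"
  shows "masked_input E p S1 R1 j x1 = masked_input E p S2 R2 j x2"
  unfolding masked_input_def self_share_def using assms by (simp cong: sum.cong)

section \<open>The probabilistic model\<close>

locale secret_sharing_model = information_space M b for M :: "'m measure" and b :: real +
  fixes n p :: nat and E :: "nat set set" and Vc :: "nat set"
    and S :: "nat \<Rightarrow> 'm \<Rightarrow> nat" and R :: "nat \<Rightarrow> nat \<Rightarrow> 'm \<Rightarrow> nat"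
  assumes n_pos: "1 \<le> n" and graph: "simple_graph n E"
    and Vc_sub: "Vc \<subseteq> {1..n}"
    and p_large: "\<forall>w\<in>space M. (\<Sum>j\<in>{1..n}. S j w) < p"
    and indep: "indep_vars (\<lambda>_. count_space UNIV)
          (case_sum S (\<lambda>(j, k). R j k))
          (Inl ` {1..n} \<union> Inr ` {(j, k). j \<in> {1..n} \<and> k \<in> nbrs E j})"
    and R_unif: "\<forall>j\<in>{1..n}. \<forall>k\<in>nbrs E j.
          distr M (count_space UNIV) (R j k) = measure_pmf (pmf_of_set {0..<p})"
begin

abbreviation "nodes \<equiv> {1..n}"
abbreviation "Vh \<equiv> nodes - Vc"
abbreviation "arcs \<equiv> adj E"

definition "honest_arcs = adj (honest_edges E Vh)"
definition "corrupt_arcs = {(j, k). {j, k} \<in> E - honest_edges E Vh}"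

lemma arcs_subset: "arcs \<subseteq> nodes \<times> nodes"
proof
  fix x assume "x \<in> arcs"
  then obtain j k where x: "x = (j, k)" "{j, k} \<in> E" unfolding adj_def by auto
  obtain u v where "{j, k} = {u, v}" "u \<in> nodes" "v \<in> nodes"
    using graph x(2) unfolding simple_graph_def by meson
  with x show "x \<in> nodes \<times> nodes" by (auto simp: doubleton_eq_iff)
qed

lemma arc_sym: "(j, k) \<in> arcs \<longleftrightarrow> (k, j) \<in> arcs"
  unfolding adj_def by (auto simp: insert_commute)

lemma finite_arcs: "finite arcs"
  using arcs_subset by (rule finite_subset) simp

lemma mem_nbrs_iff: "k \<in> nbrs E j \<longleftrightarrow> (j, k) \<in> arcs"
  unfolding nbrs_def adj_def by simp

lemma nbrs_subset: "nbrs E j \<subseteq> nodes"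
  using arcs_subset by (auto simp: mem_nbrs_iff)

lemma finite_nbrs: "finite (nbrs E j)"
  using nbrs_subset by (rule finite_subset) simp

lemma honest_arcs_eq: "honest_arcs = {(j, k) \<in> arcs. j \<in> Vh \<and> k \<in> Vh}"
  unfolding honest_arcs_def adj_def honest_edges_def by auto

lemma corrupt_arcs_eq: "corrupt_arcs = arcs - honest_arcs"
  unfolding corrupt_arcs_def honest_arcs_def adj_def honest_edges_def by auto

lemma honest_arcs_Image: "j \<in> Vh \<Longrightarrow> honest_arcs `` {j} = nbrs E j \<inter> Vh"
  unfolding honest_arcs_eq using nbrs_subset by (auto simp: mem_nbrs_iff)

lemma mem_corrupt_arcs: "(j, k) \<in> arcs \<Longrightarrow> j \<in> Vc \<or> k \<in> Vc \<Longrightarrow> (j, k) \<in> corrupt_arcs"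
  unfolding corrupt_arcs_eq honest_arcs_eq by auto

sublocale honest: finite_sym_relation Vh honest_arcs
proof
  show "honest_arcs \<subseteq> Vh \<times> Vh" unfolding honest_arcs_eq by blast
  show "sym honest_arcs"
    unfolding sym_def honest_arcs_eq using arc_sym by blast
qed simp

lemma honest_component_eq: "honest_component E Vh j = honest.component j"
  unfolding honest_component_def honest_arcs_def by auto

lemma rv_S: "j \<in> nodes \<Longrightarrow> random_variable (count_space UNIV) (S j)"
  using indep unfolding indep_vars_def by force

lemma arcs_eq: "{(j, k). j \<in> nodes \<and> k \<in> nbrs E j} = arcs"
  using arcs_subset by (auto simp: mem_nbrs_iff)

lemma rv_R: "(j, k) \<in> arcs \<Longrightarrow> random_variable (count_space UNIV) (R j k)"
  using indep unfolding indep_vars_def arcs_eq by force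

lemma sets_S_vimage: "j \<in> nodes \<Longrightarrow> S j -` A \<inter> space M \<in> sets M"
  using rv_S by (simp add: measurable_sets)

lemma sets_R_vimage: "(j, k) \<in> arcs \<Longrightarrow> R j k -` A \<inter> space M \<in> sets M"
  using rv_R by (simp add: measurable_sets)

lemma p_pos: "p > 0"
proof -
  obtain w where "w \<in> space M" using not_empty by blast
  then show ?thesis using p_large by force
qed

lemma sum_S_lt_p:
  assumes "w \<in> space M" "A \<subseteq> nodes"
  shows "(\<Sum>j\<in>A. S j w) < p"
proof -
  have "(\<Sum>j\<in>A. S j w) \<le> (\<Sum>j\<in>nodes. S j w)"
    using assms(2) by (intro sum_mono2) auto
  also have "\<dots> < p" using p_large assms(1) by blast
  finally show ?thesis .
qed

lemma S_lt_p: "w \<in> space M \<Longrightarrow> j \<in> nodes \<Longrightarrow> S j w < p"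
  using sum_S_lt_p[of w "{j}"] by simp

lemma prob_R: "(j, k) \<in> arcs \<Longrightarrow> prob (R j k -` A \<inter> space M) = card ({0..<p} \<inter> A) / p"
proof -
  assume jk: "(j, k) \<in> arcs"
  then have "j \<in> nodes" "k \<in> nbrs E j" using arcs_subset mem_nbrs_iff by auto
  have "prob (R j k -` A \<inter> space M) = measure (distr M (count_space UNIV) (R j k)) A"
    using rv_R[OF jk] by (simp add: measure_distr)
  also have "distr M (count_space UNIV) (R j k) = measure_pmf (pmf_of_set {0..<p})"
    using R_unif \<open>j \<in> nodes\<close> \<open>k \<in> nbrs E j\<close> by blast
  finally show ?thesis
    using p_pos by (simp add: measure_pmf_of_set)
qed

definition config :: "'m \<Rightarrow> (nat \<Rightarrow> nat) \<times> (nat \<times> nat \<Rightarrow> nat)" where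
  "config w = (restrict (\<lambda>j. S j w) nodes, restrict (\<lambda>e. R (fst e) (snd e) w) arcs)"

definition "secret_configs = nodes \<rightarrow>\<^sub>E {0..<p}"
definition "share_configs = arcs \<rightarrow>\<^sub>E {0..<p}"
definition "configs = secret_configs \<times> share_configs"
definition "config_space = (nodes \<rightarrow>\<^sub>E (UNIV :: nat set)) \<times> (arcs \<rightarrow>\<^sub>E (UNIV :: nat set))"

definition "prob_S j a = prob (S j -` {a} \<inter> space M)"
definition "secrets_weight s = (\<Prod>j\<in>nodes. prob_S j (s j))"
definition "config_weight d = secrets_weight (fst d) / real p ^ card arcs"

lemma finite_secret_configs: "finite secret_configs"
  unfolding secret_configs_def by (intro finite_PiE) auto

lemma finite_share_configs: "finite share_configs"
  unfolding share_configs_def using finite_arcs by (intro finite_PiE) auto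

lemma card_share_configs: "card share_configs = p ^ card arcs"
  unfolding share_configs_def using finite_arcs by (simp add: card_PiE)

lemma finite_configs: "finite configs"
  unfolding configs_def using finite_secret_configs finite_share_configs by simp

lemma countable_config_space: "countable config_space"
  unfolding config_space_def using finite_arcs by (auto intro!: countable_PiE)

lemma configs_subset: "configs \<subseteq> config_space"
  unfolding configs_def secret_configs_def share_configs_def config_space_def by (auto simp: PiE_iff)

lemma config_in_space: "config w \<in> config_space"
  unfolding config_def config_space_def by auto

lemma config_vimage:
  assumes d: "d \<in> config_space"
  shows "config -` {d} \<inter> space M =
    (\<Inter>x\<in>Inl ` nodes \<union> Inr ` arcs. case_sum S (\<lambda>(j, k). R j k) x -`
        (case x of Inl j \<Rightarrow> {fst d j} | Inr e \<Rightarrow> {snd d e}) \<inter> space M)"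
    (is "_ = ?I")
proof -
  obtain s r where d': "d = (s, r)" by (cases d)
  have s: "s \<in> extensional nodes" and r: "r \<in> extensional arcs"
    using d d' unfolding config_space_def by (auto simp: PiE_def)
  show ?thesis
  proof (intro set_eqI iffI)
    fix w assume "w \<in> config -` {d} \<inter> space M"
    then show "w \<in> ?I"
      unfolding config_def d' by (auto simp: restrict_def fun_eq_iff split: if_splits)
  next
    fix w assume w: "w \<in> ?I"
    have "S j w = s j" if "j \<in> nodes" for j
      using INT_D[OF w, of "Inl j"] that d' by simp
    then have "restrict (\<lambda>j. S j w) nodes = s"
      using s by (auto simp: fun_eq_iff extensional_def)
    moreover have "R (fst e) (snd e) w = r e" if "e \<in> arcs" for e
      using INT_D[OF w, of "Inr e"] that d' by (simp split: prod.splits)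
    then have "restrict (\<lambda>e. R (fst e) (snd e) w) arcs = r"
      using r by (auto simp: fun_eq_iff extensional_def)
    moreover have "w \<in> space M" using w n_pos by auto
    ultimately show "w \<in> config -` {d} \<inter> space M" unfolding config_def d' by simp
  qed
qed

lemma sets_config_vimage: "d \<in> config_space \<Longrightarrow> config -` {d} \<inter> space M \<in> sets M"
  unfolding config_vimage using finite_arcs n_pos
  by (intro sets.finite_INT) (auto simp: sets_S_vimage sets_R_vimage split: sum.split)

lemma measurable_config: "config \<in> measurable M (count_space config_space)"
  using countable_config_space config_in_space sets_config_vimage
  by (subst measurable_count_space_eq_countable) auto

lemma sets_config_event: "{w \<in> space M. Q (config w)} \<in> sets M"
proof -
  have "config -` {d\<in>config_space. Q d} \<inter> space M \<in> sets M"
    by (rule measurable_sets[OF measurable_config]) simp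
  moreover have "{w \<in> space M. Q (config w)} = config -` {d\<in>config_space. Q d} \<inter> space M"
    using config_in_space by auto
  ultimately show ?thesis by simp
qed

lemma prob_config_eq:
  assumes d: "d \<in> configs"
  shows "prob (config -` {d} \<inter> space M) = config_weight d"
proof -
  let ?X = "case_sum S (\<lambda>(j, k). R j k)"
  let ?A = "\<lambda>x. case x of Inl j \<Rightarrow> {fst d j} | Inr e \<Rightarrow> {snd d e}"
  let ?P = "\<lambda>x. prob (?X x -` ?A x \<inter> space M)"
  have R_point: "?P (Inr e) = 1 / real p" if "e \<in> arcs" for e
  proof -
    have "snd d e < p" using d that unfolding configs_def share_configs_def by (auto simp: PiE_iff)
    then show ?thesis using prob_R[of "fst e" "snd e" "{snd d e}"] that by (simp add: split_beta)
  qed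
  have "prob (config -` {d} \<inter> space M) = (\<Prod>x\<in>Inl ` nodes \<union> Inr ` arcs. ?P x)"
    unfolding config_vimage[OF configs_subset[THEN subsetD, OF d]]
    using indep finite_arcs n_pos unfolding arcs_eq by (intro indep_varsD) auto
  also have "\<dots> = (\<Prod>x\<in>Inl ` nodes. ?P x) * (\<Prod>x\<in>Inr ` arcs. ?P x)"
    using finite_arcs by (intro prod.union_disjoint) auto
  also have "\<dots> = secrets_weight (fst d) * (\<Prod>e\<in>arcs. 1 / real p)"
    using R_point by (simp add: prod.reindex secrets_weight_def prob_S_def)
  finally show ?thesis
    unfolding config_weight_def by (simp add: power_one_over divide_inverse power_inverse)
qed

text \<open>The shares are only almost surely below \<open>p\<close>, so the view may take infinitely many values,
  all but finitely many of them with probability zero.\<close>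

lemma AE_config_in_configs: "AE w in M. config w \<in> configs"
proof -
  have "(\<Union>e\<in>arcs. R (fst e) (snd e) -` {p..} \<inter> space M) \<in> null_sets M"
  proof (rule null_sets_UN')
    fix e assume e: "e \<in> arcs"
    have "prob (R (fst e) (snd e) -` {p..} \<inter> space M) = 0"
      using prob_R[of "fst e" "snd e" "{p..}"] e by (simp; auto)
    then show "R (fst e) (snd e) -` {p..} \<inter> space M \<in> null_sets M"
      using sets_R_vimage[of "fst e" "snd e"] e by (simp add: null_sets_def emeasure_eq_measure)
  qed (use finite_arcs in simp)
  then show ?thesis
  proof (rule AE_I', safe)
    fix w assume w: "w \<in> space M" and "config w \<notin> configs"
    then obtain e where "e \<in> arcs" "p \<le> R (fst e) (snd e) w"
      using S_lt_p unfolding configs_def secret_configs_def share_configs_def config_def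
      by (fastforce simp: PiE_iff not_less)
    with w show "w \<in> (\<Union>e\<in>arcs. R (fst e) (snd e) -` {p..} \<inter> space M)"
      by (intro UN_I[of e]) auto
  qed
qed

lemma prob_config_event:
  "prob {w \<in> space M. Q (config w)} = (\<Sum>d\<in>{d\<in>configs. Q d}. config_weight d)"
proof -
  have "prob {w \<in> space M. Q (config w)} = prob (\<Union>d\<in>{d\<in>configs. Q d}. config -` {d} \<inter> space M)"
  proof (rule finite_measure_eq_AE)
    show "AE w in M. (w \<in> {w \<in> space M. Q (config w)}) =
        (w \<in> (\<Union>d\<in>{d\<in>configs. Q d}. config -` {d} \<inter> space M))"
      using AE_config_in_configs by eventually_elim auto
    show "(\<Union>d\<in>{d\<in>configs. Q d}. config -` {d} \<inter> space M) \<in> sets M"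
      using finite_configs configs_subset sets_config_vimage by (intro sets.finite_UN) auto
  qed (rule sets_config_event)
  also have "\<dots> = (\<Sum>d\<in>{d\<in>configs. Q d}. prob (config -` {d} \<inter> space M))"
    using finite_configs configs_subset sets_config_vimage
    by (intro measure_finite_Union) (auto simp: disjoint_family_on_def emeasure_eq_measure)
  also have "\<dots> = (\<Sum>d\<in>{d\<in>configs. Q d}. config_weight d)"
    by (intro sum.cong refl) (simp add: prob_config_eq)
  finally show ?thesis .
qed

text \<open>The protocol evaluated on a fixed configuration \<open>d\<close>, as random variables on the one-point
  sample space \<open>unit\<close>.\<close>

definition masked :: "(nat \<Rightarrow> nat) \<times> (nat \<times> nat \<Rightarrow> nat) \<Rightarrow> nat \<Rightarrow> int" where
  "masked d j = masked_input E p (\<lambda>j _. fst d j) (\<lambda>j k _. snd d (j, k)) j ()"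

definition arc_inflow :: "(nat \<times> nat \<Rightarrow> nat) \<Rightarrow> nat \<Rightarrow> int" where
  "arc_inflow r j = (\<Sum>k\<in>nbrs E j. int (r (k, j)) - int (r (j, k)))"

definition corrupt_inflow :: "(nat \<times> nat \<Rightarrow> nat) \<Rightarrow> nat \<Rightarrow> int" where
  "corrupt_inflow r j = (\<Sum>k\<in>nbrs E j \<inter> Vc. int (r (k, j)) - int (r (j, k)))"

lemma masked_cong: "[masked d j = int (fst d j) + arc_inflow (snd d) j] (mod int p)"
proof -
  have "masked d j = ((int (fst d j) - (\<Sum>k\<in>nbrs E j. int (snd d (j, k)))) mod int p
                 + (\<Sum>k\<in>nbrs E j. int (snd d (k, j)))) mod int p"
    unfolding masked_def masked_input_def self_share_def by simp
  also have "[\<dots> = (int (fst d j) - (\<Sum>k\<in>nbrs E j. int (snd d (j, k))))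
                 + (\<Sum>k\<in>nbrs E j. int (snd d (k, j)))] (mod int p)"
    by (simp add: cong_def mod_add_left_eq)
  also have "(int (fst d j) - (\<Sum>k\<in>nbrs E j. int (snd d (j, k)))) + (\<Sum>k\<in>nbrs E j. int (snd d (k, j)))
      = int (fst d j) + arc_inflow (snd d) j"
    unfolding arc_inflow_def by (simp add: sum_subtractf)
  finally show ?thesis .
qed

lemma masked_range: "0 \<le> masked d j" "masked d j < int p"
  unfolding masked_def masked_input_def using p_pos by auto

lemma arc_inflow_split:
  assumes j: "j \<in> Vh"
  shows "arc_inflow r j = honest.net_inflow (\<lambda>e. int (r e)) j + corrupt_inflow r j"
proof -
  have "nbrs E j = (nbrs E j \<inter> Vh) \<union> (nbrs E j \<inter> Vc)" using nbrs_subset by auto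
  then have "arc_inflow r j =
      (\<Sum>k\<in>(nbrs E j \<inter> Vh) \<union> (nbrs E j \<inter> Vc). int (r (k, j)) - int (r (j, k)))"
    unfolding arc_inflow_def by simp
  also have "\<dots> = (\<Sum>k\<in>nbrs E j \<inter> Vh. int (r (k, j)) - int (r (j, k))) +
                  (\<Sum>k\<in>nbrs E j \<inter> Vc. int (r (k, j)) - int (r (j, k)))"
    using finite_nbrs by (intro sum.union_disjoint) auto
  finally show ?thesis
    unfolding honest.net_inflow_def honest_arcs_Image[OF j] corrupt_inflow_def .
qed

lemma corrupt_inflow_cong:
  assumes "restrict r corrupt_arcs = restrict r' corrupt_arcs"
  shows "corrupt_inflow r j = corrupt_inflow r' j"
  unfolding corrupt_inflow_def
proof (rule sum.cong[OF refl])
  fix k assume k: "k \<in> nbrs E j \<inter> Vc"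
  then have "(j, k) \<in> corrupt_arcs" "(k, j) \<in> corrupt_arcs"
    using mem_corrupt_arcs arc_sym by (auto simp: mem_nbrs_iff)
  then show "int (r (k, j)) - int (r (j, k)) = int (r' (k, j)) - int (r' (j, k))"
    using assms by (metis restrict_apply')
qed

lemma masked_input_eq_masked_config:
  assumes j: "j \<in> nodes"
  shows "masked_input E p S R j w = masked (config w) j"
  unfolding masked_def
proof (rule masked_input_cong)
  show "S j w = fst (config w) j" using j unfolding config_def by simp
  fix k assume "k \<in> nbrs E j"
  then have "(j, k) \<in> arcs" "(k, j) \<in> arcs" using mem_nbrs_iff arc_sym by auto
  then show "R j k w = snd (config w) (j, k) \<and> R k j w = snd (config w) (k, j)"
    unfolding config_def by simp
qed

definition "view_data d = (restrict (fst d) Vc, restrict (snd d) corrupt_arcs, restrict (masked d) nodes)"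

definition inflow_target :: "(nat \<Rightarrow> nat) \<times> (nat \<times> nat \<Rightarrow> nat) \<Rightarrow> (nat \<Rightarrow> nat) \<Rightarrow> nat \<Rightarrow> int" where
  "inflow_target d0 s k = masked d0 k - corrupt_inflow (snd d0) k - int (s k)"

lemma masked_corrupt_cong:
  assumes j: "j \<in> Vc" and s: "restrict s Vc = restrict s' Vc"
    and r: "restrict r corrupt_arcs = restrict r' corrupt_arcs"
  shows "masked (s, r) j = masked (s', r') j"
  unfolding masked_def
proof (rule masked_input_cong)
  show "fst (s, r) j = fst (s', r') j" using s j by (metis fst_conv restrict_apply')
  fix k assume "k \<in> nbrs E j"
  then have "(j, k) \<in> corrupt_arcs" "(k, j) \<in> corrupt_arcs"
    using j mem_corrupt_arcs arc_sym by (auto simp: mem_nbrs_iff)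
  then show "snd (s, r) (j, k) = snd (s', r') (j, k) \<and> snd (s, r) (k, j) = snd (s', r') (k, j)"
    using r by (metis snd_conv restrict_apply')
qed

lemma masked_honest_eq_iff:
  assumes j: "j \<in> Vh" and r: "restrict r corrupt_arcs = restrict (snd d0) corrupt_arcs"
  shows "masked (s, r) j = masked d0 j \<longleftrightarrow>
    [honest.net_inflow (\<lambda>e. int (r e)) j = inflow_target d0 s j] (mod int p)"
proof -
  have inflow: "[masked (s, r) j = int (s j) + honest.net_inflow (\<lambda>e. int (r e)) j + corrupt_inflow (snd d0) j] (mod int p)"
    using masked_cong[of "(s, r)" j] arc_inflow_split[OF j, of r] corrupt_inflow_cong[OF r]
    by (simp add: add.assoc)
  have "masked (s, r) j = masked d0 j \<longleftrightarrow> [masked (s, r) j = masked d0 j] (mod int p)"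
    using masked_range[of "(s, r)" j] masked_range[of d0 j] by (simp add: cong_def)
  also have "\<dots> \<longleftrightarrow> [int (s j) + honest.net_inflow (\<lambda>e. int (r e)) j + corrupt_inflow (snd d0) j = masked d0 j] (mod int p)"
    using inflow by (meson cong_sym cong_trans)
  also have "\<dots> \<longleftrightarrow> [honest.net_inflow (\<lambda>e. int (r e)) j = inflow_target d0 s j] (mod int p)"
    unfolding cong_iff_dvd_diff inflow_target_def by (simp add: algebra_simps)
  finally show ?thesis .
qed

lemma view_data_eq_iff:
  assumes s: "restrict s Vc = restrict (fst d0) Vc"
  shows "view_data (s, r) = view_data d0 \<longleftrightarrow>
    restrict r corrupt_arcs = restrict (snd d0) corrupt_arcs \<and>
    (\<forall>j\<in>Vh. [honest.net_inflow (\<lambda>e. int (r e)) j = inflow_target d0 s j] (mod int p))"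
proof (cases "restrict r corrupt_arcs = restrict (snd d0) corrupt_arcs")
  case True
  have "masked (s, r) j = masked d0 j" if "j \<in> Vc" for j
    using masked_corrupt_cong[OF that s True] by simp
  then have "restrict (masked (s, r)) nodes = restrict (masked d0) nodes \<longleftrightarrow>
      (\<forall>j\<in>Vh. masked (s, r) j = masked d0 j)"
    by (auto simp: fun_eq_iff)
  with s True show ?thesis
    unfolding view_data_def by (simp add: masked_honest_eq_iff[OF _ True])
qed (simp add: view_data_def)

lemma bij_betw_restrict_honest_arcs:
  assumes r0: "r0 \<in> share_configs"
  shows "bij_betw (\<lambda>r. restrict r honest_arcs)
    {r\<in>share_configs. restrict r corrupt_arcs = restrict r0 corrupt_arcs} (honest_arcs \<rightarrow>\<^sub>E {0..<p})"
proof (rule bij_betw_byWitness[where f' = "\<lambda>rh. restrict (\<lambda>e. if e \<in> honest_arcs then rh e else r0 e) arcs"])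
  have arcs_split: "arcs = honest_arcs \<union> corrupt_arcs" and honest_sub: "honest_arcs \<subseteq> arcs"
    unfolding corrupt_arcs_eq honest_arcs_eq by auto
  show "\<forall>r\<in>{r\<in>share_configs. restrict r corrupt_arcs = restrict r0 corrupt_arcs}.
      restrict (\<lambda>e. if e \<in> honest_arcs then restrict r honest_arcs e else r0 e) arcs = r"
    using arcs_split unfolding share_configs_def
    by (auto simp: fun_eq_iff PiE_iff extensional_def restrict_def)
  show "\<forall>rh\<in>honest_arcs \<rightarrow>\<^sub>E {0..<p}.
      restrict (restrict (\<lambda>e. if e \<in> honest_arcs then rh e else r0 e) arcs) honest_arcs = rh"
    using honest_sub by (auto simp: fun_eq_iff PiE_iff extensional_def)
  show "(\<lambda>r. restrict r honest_arcs) ` {r\<in>share_configs. restrict r corrupt_arcs = restrict r0 corrupt_arcs}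
      \<subseteq> honest_arcs \<rightarrow>\<^sub>E {0..<p}"
    using honest_sub unfolding share_configs_def by (auto simp: PiE_iff)
  show "(\<lambda>rh. restrict (\<lambda>e. if e \<in> honest_arcs then rh e else r0 e) arcs) ` (honest_arcs \<rightarrow>\<^sub>E {0..<p})
      \<subseteq> {r\<in>share_configs. restrict r corrupt_arcs = restrict r0 corrupt_arcs}"
    using r0 unfolding share_configs_def corrupt_arcs_eq by (auto simp: PiE_iff fun_eq_iff)
qed

lemma card_shares_with_view_data:
  assumes d0: "d0 \<in> configs"
  shows "card {r\<in>share_configs. view_data (s, r) = view_data d0} =
    (if restrict s Vc = restrict (fst d0) Vc \<and>
        (\<forall>j\<in>Vh. [(\<Sum>k\<in>honest.component j. inflow_target d0 s k) = 0] (mod int p))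
     then card (honest.flow_solutions p (\<lambda>_. 0)) else 0)"
proof (cases "restrict s Vc = restrict (fst d0) Vc")
  case True
  let ?H = "{r\<in>share_configs. restrict r corrupt_arcs = restrict (snd d0) corrupt_arcs}"
  let ?P = "\<lambda>rh. \<forall>j\<in>Vh. [honest.net_inflow (\<lambda>e. int (rh e)) j = inflow_target d0 s j] (mod int p)"
  have bij: "bij_betw (\<lambda>r. restrict r honest_arcs) ?H (honest_arcs \<rightarrow>\<^sub>E {0..<p})"
    using d0 unfolding configs_def by (intro bij_betw_restrict_honest_arcs) auto
  have "honest.net_inflow (\<lambda>e. int (restrict r honest_arcs e)) j = honest.net_inflow (\<lambda>e. int (r e)) j"
    for r j by (rule honest.net_inflow_cong) simp
  then have P_restrict: "?P (restrict r honest_arcs) \<longleftrightarrow> ?P r" for r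
    by simp
  have "{r\<in>share_configs. view_data (s, r) = view_data d0} = {r\<in>?H. ?P (restrict r honest_arcs)}"
    unfolding view_data_eq_iff[OF True] P_restrict by auto
  then have "card {r\<in>share_configs. view_data (s, r) = view_data d0} =
      card {rh\<in>honest_arcs \<rightarrow>\<^sub>E {0..<p}. ?P rh}"
    using card_filter_bij_betw[OF bij, of ?P] by simp
  also have "\<dots> = card (honest.flow_solutions p (inflow_target d0 s))"
    unfolding honest.flow_solutions_def ..
  finally show ?thesis
    using True honest.card_flow_solutions[OF p_pos] by simp
qed (auto simp: view_data_def)

end

section \<open>The adversary's view\<close>

locale pdmm_privacy = secret_sharing_model +
  fixes c \<theta> :: real and i :: nat
  assumes c_pos: "c > 0" and i_honest: "i \<in> {1..n} - Vc"
begin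

definition "view d = adversary_view n E Vc p c \<theta> (\<lambda>j _. fst d j) (\<lambda>j k _. snd d (j, k)) ()"

lemma view_eq:
  "view d = (restrict (fst d) Vc, restrict (snd d) corrupt_arcs,
     \<lambda>t. restrict (pdmm_x E c \<theta> (\<lambda>j. real_of_int (masked d j)) t) nodes)"
  unfolding view_def adversary_view_def corrupt_arcs_def masked_def by simp

lemma pdmm_x_masked_cong:
  assumes "\<And>j. j \<in> nodes \<Longrightarrow> m j = m' j"
  shows "(\<lambda>t. restrict (pdmm_x E c \<theta> (\<lambda>j. real_of_int (m j)) t) nodes) =
         (\<lambda>t. restrict (pdmm_x E c \<theta> (\<lambda>j. real_of_int (m' j)) t) nodes)"
proof (intro ext)
  fix t j
  have "pdmm_x E c \<theta> (\<lambda>j. real_of_int (m j)) t j = pdmm_x E c \<theta> (\<lambda>j. real_of_int (m' j)) t j"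
    if "j \<in> nodes"
    using assms nbrs_subset that by (intro pdmm_x_cong[of nodes]) auto
  then show "restrict (pdmm_x E c \<theta> (\<lambda>j. real_of_int (m j)) t) nodes j =
      restrict (pdmm_x E c \<theta> (\<lambda>j. real_of_int (m' j)) t) nodes j"
    by simp
qed

lemma adversary_view_eq_view_config: "adversary_view n E Vc p c \<theta> S R w = view (config w)"
proof -
  have "restrict (\<lambda>j. S j w) Vc = restrict (fst (config w)) Vc"
    using Vc_sub unfolding config_def by (auto simp: restrict_def fun_eq_iff)
  moreover have "restrict (\<lambda>(j, k). R j k w) corrupt_arcs = restrict (snd (config w)) corrupt_arcs"
    unfolding config_def corrupt_arcs_eq by (auto simp: restrict_def)
  moreover have "(\<lambda>t. restrict (pdmm_x E c \<theta> (\<lambda>j. real_of_int (masked_input E p S R j w)) t) nodes) =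
      (\<lambda>t. restrict (pdmm_x E c \<theta> (\<lambda>j. real_of_int (masked (config w) j)) t) nodes)"
    by (rule pdmm_x_masked_cong) (rule masked_input_eq_masked_config)
  ultimately show ?thesis
    unfolding view_eq adversary_view_def corrupt_arcs_def[symmetric] by simp
qed

lemma view_cong:
  assumes "view_data d = view_data d'"
  shows "view d = view d'"
proof -
  from assms have s: "restrict (fst d) Vc = restrict (fst d') Vc"
    and r: "restrict (snd d) corrupt_arcs = restrict (snd d') corrupt_arcs"
    and m: "restrict (masked d) nodes = restrict (masked d') nodes"
    unfolding view_data_def by simp_all
  have "masked d j = masked d' j" if "j \<in> nodes" for j
    using fun_cong[OF m, of j] that by simp
  then have "(\<lambda>t. restrict (pdmm_x E c \<theta> (\<lambda>j. real_of_int (masked d j)) t) nodes) =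
      (\<lambda>t. restrict (pdmm_x E c \<theta> (\<lambda>j. real_of_int (masked d' j)) t) nodes)"
    by (rule pdmm_x_masked_cong)
  with s r show ?thesis
    unfolding view_eq by simp
qed

lemma view_data_cong:
  assumes "view d = view d'"
  shows "view_data d = view_data d'"
proof -
  from assms have s: "restrict (fst d) Vc = restrict (fst d') Vc"
    and r: "restrict (snd d) corrupt_arcs = restrict (snd d') corrupt_arcs"
    and x: "(\<lambda>t. restrict (pdmm_x E c \<theta> (\<lambda>j. real_of_int (masked d j)) t) nodes) =
            (\<lambda>t. restrict (pdmm_x E c \<theta> (\<lambda>j. real_of_int (masked d' j)) t) nodes)"
    unfolding view_eq by simp_all
  \<comment> \<open>The first iterate reveals the masked inputs, since \<open>1 + c d\<^sub>j > 0\<close>.\<close>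
  have "masked d j = masked d' j" if j: "j \<in> nodes" for j
  proof -
    have "pdmm_x E c \<theta> (\<lambda>j. real_of_int (masked d j)) 0 j = pdmm_x E c \<theta> (\<lambda>j. real_of_int (masked d' j)) 0 j"
      using fun_cong[OF fun_cong[OF x, of 0], of j] j by simp
    moreover have "1 + c * real (card (nbrs E j)) > 0" using c_pos by (simp add: add_pos_nonneg)
    ultimately show ?thesis by (simp add: pdmm_x_0)
  qed
  then have "restrict (masked d) nodes = restrict (masked d') nodes"
    by (intro restrict_ext)
  with s r show ?thesis
    unfolding view_data_def by simp
qed

lemma view_eq_iff: "view d = view d' \<longleftrightarrow> view_data d = view_data d'"
  using view_cong view_data_cong by blast

abbreviation "Vh1 \<equiv> honest.component i"

lemma Vh1_subset: "Vh1 \<subseteq> Vh"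
  using honest.component_subset i_honest by simp

lemma i_in_Vh1: "i \<in> Vh1"
  by simp

lemma component_disjoint_Vh1: "j \<in> Vh \<Longrightarrow> j \<notin> Vh1 \<Longrightarrow> honest.component j \<inter> Vh1 = {}"
  using honest.component_eq by blast

text \<open>Honest shares cancel in the sum of the masked inputs over \<open>Vh1\<close>, so the adversary
  recovers the sum of the secrets over \<open>Vh1\<close> from the shares it holds.\<close>

definition recovered_sum :: "(nat \<Rightarrow> nat) \<times> (nat \<times> nat \<Rightarrow> nat) \<Rightarrow> nat" where
  "recovered_sum d = nat ((\<Sum>j\<in>Vh1. masked d j - corrupt_inflow (snd d) j) mod int p)"

lemma recovered_sum_eq: "recovered_sum d = (\<Sum>j\<in>Vh1. fst d j) mod p"
proof -
  have "[(\<Sum>j\<in>Vh1. masked d j - corrupt_inflow (snd d) j) =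
      (\<Sum>j\<in>Vh1. int (fst d j) + arc_inflow (snd d) j - corrupt_inflow (snd d) j)] (mod int p)"
    by (intro cong_sum cong_diff masked_cong cong_refl)
  also have "(\<Sum>j\<in>Vh1. int (fst d j) + arc_inflow (snd d) j - corrupt_inflow (snd d) j) =
      (\<Sum>j\<in>Vh1. int (fst d j) + honest.net_inflow (\<lambda>e. int (snd d e)) j)"
    using Vh1_subset by (intro sum.cong refl) (auto simp: arc_inflow_split)
  also have "\<dots> = int (\<Sum>j\<in>Vh1. fst d j)"
    using honest.sum_net_inflow_component[OF i_honest] by (simp add: sum.distrib)
  finally have "(\<Sum>j\<in>Vh1. masked d j - corrupt_inflow (snd d) j) mod int p =
      int ((\<Sum>j\<in>Vh1. fst d j) mod p)"
    by (simp add: cong_def zmod_int)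
  then show ?thesis
    unfolding recovered_sum_def by simp
qed

lemma recovered_sum_cong:
  assumes "view_data d = view_data d'"
  shows "recovered_sum d = recovered_sum d'"
proof -
  from assms have r: "restrict (snd d) corrupt_arcs = restrict (snd d') corrupt_arcs"
    and m: "restrict (masked d) nodes = restrict (masked d') nodes"
    unfolding view_data_def by simp_all
  have "masked d j - corrupt_inflow (snd d) j = masked d' j - corrupt_inflow (snd d') j"
    if "j \<in> Vh1" for j
    using fun_cong[OF m, of j] that Vh1_subset corrupt_inflow_cong[OF r] by auto
  then have "(\<Sum>j\<in>Vh1. masked d j - corrupt_inflow (snd d) j) =
      (\<Sum>j\<in>Vh1. masked d' j - corrupt_inflow (snd d') j)"
    by (rule sum.cong[OF refl])
  then show ?thesis
    unfolding recovered_sum_def by simp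
qed

definition "sum_of_view v = recovered_sum (SOME d. view d = v)"

lemma sum_of_view_view: "sum_of_view (view d) = recovered_sum d"
proof -
  have "view (SOME d'. view d' = view d) = view d" by (rule someI) (rule refl)
  then show ?thesis
    unfolding sum_of_view_def using recovered_sum_cong view_eq_iff by blast
qed

lemma component_sum_config:
  assumes "w \<in> space M"
  shows "(\<Sum>j\<in>Vh1. S j w) = (\<Sum>j\<in>Vh1. fst (config w) j) mod p"
proof -
  have "(\<Sum>j\<in>Vh1. fst (config w) j) = (\<Sum>j\<in>Vh1. S j w)"
    using Vh1_subset unfolding config_def by (intro sum.cong) auto
  moreover have "(\<Sum>j\<in>Vh1. S j w) < p"
    using sum_S_lt_p[OF assms, of Vh1] Vh1_subset by blast
  ultimately show ?thesis by simp
qed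

lemma component_sum_eq_sum_of_view:
  "w \<in> space M \<Longrightarrow> (\<Sum>j\<in>Vh1. S j w) = sum_of_view (adversary_view n E Vc p c \<theta> S R w)"
  by (simp add: adversary_view_eq_view_config sum_of_view_view recovered_sum_eq component_sum_config)

lemma sum_inflow_target_Vh1_iff:
  "[(\<Sum>k\<in>Vh1. inflow_target d0 s k) = 0] (mod int p) \<longleftrightarrow> (\<Sum>j\<in>Vh1. s j) mod p = recovered_sum d0"
proof -
  define X where "X = (\<Sum>j\<in>Vh1. masked d0 j - corrupt_inflow (snd d0) j)"
  define Y where "Y = (\<Sum>j\<in>Vh1. s j)"
  have "(\<Sum>k\<in>Vh1. inflow_target d0 s k) = X - int Y"
    unfolding inflow_target_def X_def Y_def by (simp add: sum_subtractf)
  then have "[(\<Sum>k\<in>Vh1. inflow_target d0 s k) = 0] (mod int p) \<longleftrightarrow> X mod int p = int Y mod int p"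
    by (simp add: cong_iff_dvd_diff mod_eq_dvd_iff)
  also have "int Y mod int p = int (Y mod p)" by (simp add: zmod_int)
  also have "X mod int p = int (Y mod p) \<longleftrightarrow> nat (X mod int p) = Y mod p"
    using p_pos by (auto simp: nat_eq_iff)
  finally show ?thesis
    unfolding recovered_sum_def X_def[symmetric] Y_def[symmetric] by (simp add: eq_commute)
qed

lemma component_conditions_split:
  "(\<forall>j\<in>Vh. [(\<Sum>k\<in>honest.component j. inflow_target d0 s k) = 0] (mod int p)) \<longleftrightarrow>
   (\<Sum>j\<in>Vh1. s j) mod p = recovered_sum d0 \<and>
   (\<forall>j\<in>Vh - Vh1. [(\<Sum>k\<in>honest.component j. inflow_target d0 (restrict s (nodes - Vh1)) k) = 0] (mod int p))"
proof -
  have outside: "(\<Sum>k\<in>honest.component j. inflow_target d0 (restrict s (nodes - Vh1)) k) =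
      (\<Sum>k\<in>honest.component j. inflow_target d0 s k)" if j: "j \<in> Vh" "j \<notin> Vh1" for j
  proof (rule sum.cong[OF refl])
    fix k assume "k \<in> honest.component j"
    then have "k \<in> nodes - Vh1"
      using component_disjoint_Vh1[OF j] honest.component_subset[OF j(1)] by auto
    then show "inflow_target d0 (restrict s (nodes - Vh1)) k = inflow_target d0 s k"
      unfolding inflow_target_def by simp
  qed
  show ?thesis
  proof (intro iffI conjI ballI)
    assume h: "\<forall>j\<in>Vh. [(\<Sum>k\<in>honest.component j. inflow_target d0 s k) = 0] (mod int p)"
    then show "(\<Sum>j\<in>Vh1. s j) mod p = recovered_sum d0"
      using i_honest sum_inflow_target_Vh1_iff by blast
    fix j assume "j \<in> Vh - Vh1"
    then show "[(\<Sum>k\<in>honest.component j. inflow_target d0 (restrict s (nodes - Vh1)) k) = 0] (mod int p)"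
      using h outside by simp
  next
    fix j assume j: "j \<in> Vh" and h: "(\<Sum>j\<in>Vh1. s j) mod p = recovered_sum d0 \<and>
      (\<forall>j\<in>Vh - Vh1. [(\<Sum>k\<in>honest.component j. inflow_target d0 (restrict s (nodes - Vh1)) k) = 0] (mod int p))"
    show "[(\<Sum>k\<in>honest.component j. inflow_target d0 s k) = 0] (mod int p)"
    proof (cases "j \<in> Vh1")
      case True
      then show ?thesis
        using h sum_inflow_target_Vh1_iff honest.component_eq[OF True] by simp
    next
      case False
      with j have "j \<in> Vh - Vh1" by blast
      with h have "[(\<Sum>k\<in>honest.component j. inflow_target d0 (restrict s (nodes - Vh1)) k) = 0] (mod int p)"
        by blast
      then show ?thesis using outside[OF j False] by simp
    qed
  qed
qed

definition "component_term Q z s1 =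
    (if Q (s1 i) \<and> (\<Sum>j\<in>Vh1. s1 j) mod p = z then \<Prod>j\<in>Vh1. prob_S j (s1 j) else 0)"

definition "component_weight Q z = (\<Sum>s1\<in>Vh1 \<rightarrow>\<^sub>E {0..<p}. component_term Q z s1)"

definition "outside_weight d0 s2 =
    (if restrict s2 Vc = restrict (fst d0) Vc \<and>
        (\<forall>j\<in>Vh - Vh1. [(\<Sum>k\<in>honest.component j. inflow_target d0 s2 k) = 0] (mod int p))
     then \<Prod>j\<in>nodes - Vh1. prob_S j (s2 j) else 0) *
    real (card (honest.flow_solutions p (\<lambda>_. 0))) / real p ^ card arcs"

definition "view_factor d0 = (\<Sum>s2\<in>(nodes - Vh1) \<rightarrow>\<^sub>E {0..<p}. outside_weight d0 s2)"

definition "outside_mass = (\<Sum>s2\<in>(nodes - Vh1) \<rightarrow>\<^sub>E {0..<p}. \<Prod>j\<in>nodes - Vh1. prob_S j (s2 j))"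

lemma secrets_weight_split:
  "secrets_weight s = (\<Prod>j\<in>Vh1. prob_S j (s j)) * (\<Prod>j\<in>nodes - Vh1. prob_S j (s j))"
  unfolding secrets_weight_def using Vh1_subset
  by (subst prod.subset_diff[of Vh1 nodes]) (auto simp: mult.commute)

lemma secret_configs_split: "secret_configs = (Vh1 \<union> (nodes - Vh1)) \<rightarrow>\<^sub>E {0..<p}"
proof -
  have "Vh1 \<union> (nodes - Vh1) = nodes" using Vh1_subset by auto
  then show ?thesis unfolding secret_configs_def by simp
qed

lemma component_term_restrict:
  "component_term Q z (restrict s Vh1) =
    (if Q (s i) \<and> (\<Sum>j\<in>Vh1. s j) mod p = z then \<Prod>j\<in>Vh1. prob_S j (s j) else 0)"
  unfolding component_term_def using i_in_Vh1 by simp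

lemma secrets_weight_card_view_data:
  assumes d0: "d0 \<in> configs"
  shows "secrets_weight s / real p ^ card arcs *
      real (card {r\<in>share_configs. Q (s i) \<and> view_data (s, r) = view_data d0}) =
    component_term Q (recovered_sum d0) (restrict s Vh1) * outside_weight d0 (restrict s (nodes - Vh1))"
proof -
  have "restrict (restrict s (nodes - Vh1)) Vc = restrict s Vc"
    using Vc_sub Vh1_subset by (auto simp: restrict_def fun_eq_iff)
  then have outside: "outside_weight d0 (restrict s (nodes - Vh1)) =
      (if restrict s Vc = restrict (fst d0) Vc \<and>
          (\<forall>j\<in>Vh - Vh1. [(\<Sum>k\<in>honest.component j. inflow_target d0 (restrict s (nodes - Vh1)) k) = 0] (mod int p))
       then \<Prod>j\<in>nodes - Vh1. prob_S j (s j) else 0) *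
      real (card (honest.flow_solutions p (\<lambda>_. 0))) / real p ^ card arcs"
    unfolding outside_weight_def by simp
  have "card {r\<in>share_configs. Q (s i) \<and> view_data (s, r) = view_data d0} =
      (if Q (s i) then card {r\<in>share_configs. view_data (s, r) = view_data d0} else 0)"
    by simp
  then show ?thesis
    unfolding component_term_restrict outside
    using card_shares_with_view_data[OF d0, of s] component_conditions_split[of d0 s]
      secrets_weight_split[of s]
    by (auto simp: algebra_simps)
qed

lemma secrets_weight_card_component_sum:
  "secrets_weight s / real p ^ card arcs *
      real (card {r\<in>share_configs. Q (s i) \<and> (\<Sum>j\<in>Vh1. s j) mod p = z}) =
    component_term Q z (restrict s Vh1) * (\<Prod>j\<in>nodes - Vh1. prob_S j (restrict s (nodes - Vh1) j))"
proof -
  have "card {r\<in>share_configs. Q (s i) \<and> (\<Sum>j\<in>Vh1. s j) mod p = z} =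
      (if Q (s i) \<and> (\<Sum>j\<in>Vh1. s j) mod p = z then p ^ card arcs else 0)"
  proof (cases "Q (s i) \<and> (\<Sum>j\<in>Vh1. s j) mod p = z")
    case False
    then have "{r\<in>share_configs. Q (s i) \<and> (\<Sum>j\<in>Vh1. s j) mod p = z} = {}" by blast
    then show ?thesis unfolding if_not_P[OF False] by (simp only: card.empty)
  qed (simp add: card_share_configs)
  then show ?thesis
    using p_pos secrets_weight_split[of s] by (simp add: component_term_restrict)
qed

lemma sum_config_weight_view_data:
  assumes d0: "d0 \<in> configs"
  shows "(\<Sum>d\<in>{d\<in>configs. Q (fst d i) \<and> view_data d = view_data d0}. config_weight d) =
    view_factor d0 * component_weight Q (recovered_sum d0)"
proof -
  have "(\<Sum>d\<in>{d\<in>configs. Q (fst d i) \<and> view_data d = view_data d0}. config_weight d) =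
      (\<Sum>s\<in>secret_configs. secrets_weight s / real p ^ card arcs *
         real (card {r\<in>share_configs. Q (fst (s, r) i) \<and> view_data (s, r) = view_data d0}))"
    unfolding configs_def config_weight_def
    by (rule sum_filter_Times_fst[OF finite_secret_configs finite_share_configs])
  also have "\<dots> = (\<Sum>s\<in>secret_configs.
      component_term Q (recovered_sum d0) (restrict s Vh1) * outside_weight d0 (restrict s (nodes - Vh1)))"
  proof (rule sum.cong[OF refl])
    fix s :: "nat \<Rightarrow> nat"
    show "secrets_weight s / real p ^ card arcs *
         real (card {r\<in>share_configs. Q (fst (s, r) i) \<and> view_data (s, r) = view_data d0}) =
        component_term Q (recovered_sum d0) (restrict s Vh1) * outside_weight d0 (restrict s (nodes - Vh1))"
      using secrets_weight_card_view_data[OF d0, of s Q] by simp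
  qed
  also have "\<dots> = component_weight Q (recovered_sum d0) * view_factor d0"
    unfolding secret_configs_split view_factor_def component_weight_def
    by (rule sum_PiE_Un_restrict_mult) blast
  finally show ?thesis by (simp add: mult.commute)
qed

lemma sum_config_weight_component_sum:
  "(\<Sum>d\<in>{d\<in>configs. Q (fst d i) \<and> (\<Sum>j\<in>Vh1. fst d j) mod p = z}. config_weight d) =
    outside_mass * component_weight Q z"
proof -
  have "(\<Sum>d\<in>{d\<in>configs. Q (fst d i) \<and> (\<Sum>j\<in>Vh1. fst d j) mod p = z}. config_weight d) =
      (\<Sum>s\<in>secret_configs. secrets_weight s / real p ^ card arcs *
         real (card {r\<in>share_configs. Q (fst (s, r) i) \<and> (\<Sum>j\<in>Vh1. fst (s, r) j) mod p = z}))"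
    unfolding configs_def config_weight_def
    by (rule sum_filter_Times_fst[OF finite_secret_configs finite_share_configs])
  also have "\<dots> = (\<Sum>s\<in>secret_configs.
      component_term Q z (restrict s Vh1) * (\<Prod>j\<in>nodes - Vh1. prob_S j (restrict s (nodes - Vh1) j)))"
  proof (rule sum.cong[OF refl])
    fix s :: "nat \<Rightarrow> nat"
    show "secrets_weight s / real p ^ card arcs *
         real (card {r\<in>share_configs. Q (fst (s, r) i) \<and> (\<Sum>j\<in>Vh1. fst (s, r) j) mod p = z}) =
        component_term Q z (restrict s Vh1) * (\<Prod>j\<in>nodes - Vh1. prob_S j (restrict s (nodes - Vh1) j))"
      using secrets_weight_card_component_sum[of s Q z] by simp
  qed
  also have "\<dots> = component_weight Q z * outside_mass"
    unfolding secret_configs_split outside_mass_def component_weight_def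
    by (rule sum_PiE_Un_restrict_mult) blast
  finally show ?thesis by (simp add: mult.commute)
qed

abbreviation "observed \<equiv> adversary_view n E Vc p c \<theta> S R"
abbreviation "component_sum \<equiv> \<lambda>w. \<Sum>j\<in>Vh1. S j w"

lemma S_i_config: "S i w = fst (config w) i"
  using i_honest unfolding config_def by simp

lemma observed_vimage:
  "observed -` {view d0} \<inter> space M = {w \<in> space M. view_data (config w) = view_data d0}"
  by (auto simp: adversary_view_eq_view_config view_eq_iff)

lemma component_sum_vimage:
  "component_sum -` {z} \<inter> space M = {w \<in> space M. (\<Sum>j\<in>Vh1. fst (config w) j) mod p = z}"
  using component_sum_config by auto

lemma observed_cond_indep:
  assumes d0: "d0 \<in> configs"
  shows "prob ((\<lambda>w. (S i w, observed w)) -` {(x, view d0)} \<inter> space M) *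
      prob (component_sum -` {recovered_sum d0} \<inter> space M) =
    prob ((\<lambda>w. (S i w, component_sum w)) -` {(x, recovered_sum d0)} \<inter> space M) *
      prob (observed -` {view d0} \<inter> space M)"
proof -
  have "(\<lambda>w. (S i w, observed w)) -` {(x, view d0)} \<inter> space M =
      {w \<in> space M. fst (config w) i = x \<and> view_data (config w) = view_data d0}"
    using observed_vimage[of d0] S_i_config by auto
  then have joint_view: "prob ((\<lambda>w. (S i w, observed w)) -` {(x, view d0)} \<inter> space M) =
      view_factor d0 * component_weight (\<lambda>a. a = x) (recovered_sum d0)"
    using prob_config_event[of "\<lambda>d. fst d i = x \<and> view_data d = view_data d0"]
      sum_config_weight_view_data[OF d0, of "\<lambda>a. a = x"] by simp
  have "prob (observed -` {view d0} \<inter> space M) = view_factor d0 * component_weight (\<lambda>_. True) (recovered_sum d0)"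
    using prob_config_event[of "\<lambda>d. view_data d = view_data d0"]
      sum_config_weight_view_data[OF d0, of "\<lambda>_. True"] by (simp add: observed_vimage)
  moreover have "(\<lambda>w. (S i w, component_sum w)) -` {(x, recovered_sum d0)} \<inter> space M =
      {w \<in> space M. fst (config w) i = x \<and> (\<Sum>j\<in>Vh1. fst (config w) j) mod p = recovered_sum d0}"
    using component_sum_config S_i_config by auto
  then have "prob ((\<lambda>w. (S i w, component_sum w)) -` {(x, recovered_sum d0)} \<inter> space M) =
      outside_mass * component_weight (\<lambda>a. a = x) (recovered_sum d0)"
    using prob_config_event[of "\<lambda>d. fst d i = x \<and> (\<Sum>j\<in>Vh1. fst d j) mod p = recovered_sum d0"]
      sum_config_weight_component_sum[of "\<lambda>a. a = x"] by simp
  moreover have "prob (component_sum -` {recovered_sum d0} \<inter> space M) =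
      outside_mass * component_weight (\<lambda>_. True) (recovered_sum d0)"
    using prob_config_event[of "\<lambda>d. (\<Sum>j\<in>Vh1. fst d j) mod p = recovered_sum d0"]
      sum_config_weight_component_sum[of "\<lambda>_. True"] by (simp add: component_sum_vimage)
  ultimately show ?thesis
    unfolding joint_view by (simp add: algebra_simps)
qed

lemma mutual_information_observed_eq_component_sum:
  "mutual_information b (count_space (S i ` space M)) (count_space (observed ` space M)) (S i) observed =
   mutual_information b (count_space (S i ` space M)) (count_space (component_sum ` space M))
     (S i) component_sum"
proof (rule mutual_information_sufficient_statistic[where g = sum_of_view
      and FX = "S i ` space M" and FV = "observed ` space M \<inter> view ` configs"])
  show "countable (S i ` space M)" by (rule countableI_type)
  have "observed ` space M \<subseteq> view ` config_space"
    using adversary_view_eq_view_config config_in_space by auto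
  then show "countable (observed ` space M)"
    using countable_config_space by (meson countable_image countable_subset)
  show "S i -` {a} \<inter> space M \<in> sets M" for a
    using sets_S_vimage i_honest by simp
  have "observed -` {a} \<inter> space M = {w \<in> space M. view (config w) = a}" for a
    by (auto simp: adversary_view_eq_view_config)
  then show "observed -` {a} \<inter> space M \<in> sets M" for a
    using sets_config_event[of "\<lambda>d. view d = a"] by simp
  show "component_sum -` {a} \<inter> space M \<in> sets M" for a
    unfolding component_sum_vimage by (rule sets_config_event)
  have "S i ` space M \<subseteq> {0..<p}" using S_lt_p i_honest by auto
  then show "finite (S i ` space M)" by (rule finite_subset) simp
  show "finite (observed ` space M \<inter> view ` configs)"
    using finite_configs by simp
  show "prob (observed -` {v} \<inter> space M) = 0"
    if "v \<in> observed ` space M" "v \<notin> observed ` space M \<inter> view ` configs" for v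
  proof -
    have "observed -` {v} \<inter> space M = {w \<in> space M. view (config w) = v}"
      by (auto simp: adversary_view_eq_view_config)
    moreover have "{d \<in> configs. view d = v} = {}" using that by blast
    ultimately show ?thesis using prob_config_event[of "\<lambda>d. view d = v"] by (simp only: sum.empty)
  qed
  show "component_sum w = sum_of_view (observed w)" if "w \<in> space M" for w
    using component_sum_eq_sum_of_view[OF that] .
  fix x v assume "v \<in> observed ` space M \<inter> view ` configs"
  then obtain d0 where "d0 \<in> configs" "v = view d0" by auto
  then show "prob ((\<lambda>w. (S i w, observed w)) -` {(x, v)} \<inter> space M) *
      prob (component_sum -` {sum_of_view v} \<inter> space M) =
    prob ((\<lambda>w. (S i w, component_sum w)) -` {(x, sum_of_view v)} \<inter> space M) *
      prob (observed -` {v} \<inter> space M)"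
    using observed_cond_indep by (simp add: sum_of_view_view)
qed auto

end

theorem theorem1:
  fixes M :: "'m measure" and b :: real
    and n p :: nat and E :: "nat set set" and Vc :: "nat set"
    and S :: "nat \<Rightarrow> 'm \<Rightarrow> nat" and R :: "nat \<Rightarrow> nat \<Rightarrow> 'm \<Rightarrow> nat"
    and c \<theta> :: real and i :: nat
  assumes info: "information_space M b"
    and graph: "simple_graph n E" and conn: "connected_graph n E"
    and Vc_sub: "Vc \<subseteq> {1..n}"
    and corrupt_nbr: "\<forall>k\<in>{1..n} - Vc. \<exists>j\<in>nbrs E k. j \<in> Vc"
    and p_large: "\<forall>w\<in>space M. (\<Sum>j\<in>{1..n}. S j w) < p"
    and indep: "prob_space.indep_vars M (\<lambda>_. count_space UNIV)
          (case_sum S (\<lambda>(j, k). R j k))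
          (Inl ` {1..n} \<union> Inr ` {(j, k). j \<in> {1..n} \<and> k \<in> nbrs E j})"
    and R_unif: "\<forall>j\<in>{1..n}. \<forall>k\<in>nbrs E j.
          distr M (count_space UNIV) (R j k) = measure_pmf (pmf_of_set {0..<p})"
    and c_pos: "c > 0" and theta: "0 \<le> \<theta>" "\<theta> < 1"
    and i_honest: "i \<in> {1..n} - Vc"
  shows "prob_space.mutual_information M b
           (count_space (S i ` space M))
           (count_space (adversary_view n E Vc p c \<theta> S R ` space M))
           (S i) (adversary_view n E Vc p c \<theta> S R)
       = prob_space.mutual_information M b
           (count_space (S i ` space M))
           (count_space ((\<lambda>w. \<Sum>j\<in>honest_component E ({1..n} - Vc) i. S j w) ` space M))
           (S i) (\<lambda>w. \<Sum>j\<in>honest_component E ({1..n} - Vc) i. S j w)"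
proof -
  have "secret_sharing_model M b n p E Vc S R"
    unfolding secret_sharing_model_def secret_sharing_model_axioms_def
    using info graph Vc_sub p_large indep R_unif i_honest by auto
  then interpret pdmm_privacy M b n p E Vc S R c \<theta> i
    using c_pos i_honest by (simp add: pdmm_privacy_def pdmm_privacy_axioms_def)
  show ?thesis
    unfolding honest_component_eq by (rule mutual_information_observed_eq_component_sum)
qed

end
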